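(* Let $\Bbbk$ be a field of characteristic $0$ and $A=\Bbbk\langle s,t\rangle$ over $B=\Bbbk$. Consider a double bracket on $A$ with $\{\!\{t,t\}\!\}=\lambda(t\otimes1-1\otimes t)+\mu(t^2\otimes1-1\otimes t^2)+\nu(t^2\otimes t-t\otimes t^2)$, $\{\!\{s,s\}\!\}=l(s\otimes1-1\otimes s)+m(s^2\otimes1-1\otimes s^2)+n(s^2\otimes s-s\otimes s^2)$, with $4(\mu^2-\lambda\nu)=1$, $4(m^2-ln)=1$, and $\{\!\{t,s\}\!\}=\alpha_0t^2\otimes1+\alpha_0'1\otimes t^2+\beta_0s^2\otimes1+\beta_0'1\otimes s^2+\gamma_0t\otimes t+\gamma_1s\otimes s+\alpha_1ts\otimes1+\alpha_1'st\otimes1+\alpha_2t\otimes s+\alpha_2's\otimes t+\alpha_31\otimes ts+\alpha_3'1\otimes st+\beta_1t\otimes1+\beta_1'1\otimes t+\beta_2s\otimes1+\beta_2'1\otimes s+\gamma1\otimes1$, all coefficients in $\Bbbk$. If this double bracket is quasi-Poisson, then it is isomorphic (as a double quasi-Poisson algebra) to one of the following: Case 1: for $\gamma_0,\gamma_1\in\Bbbk$, $\mu=\pm\frac12$, $\alpha\in\Bbbk$ with $\alpha^2=\frac14+\gamma_0\gamma_1$: $\{\!\{t,t\}\!\}=\mu(t^2\otimes1-1\otimes t^2)$, $\{\!\{s,s\}\!\}=\mu(s^2\otimes1-1\otimes s^2)$, $\{\!\{t,s\}\!\}=\gamma_0t\otimes t+\gamma_1s\otimes s+\mu(st\otimes1-1\otimes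 ts)+\alpha(t\otimes s+s\otimes t)$; Case 2: for $\gamma\in\Bbbk$, $\alpha,\mu=\pm\frac12$: $\{\!\{t,t\}\!\}=\mu(t^2\otimes1-1\otimes t^2)$, $\{\!\{s,s\}\!\}=-\mu(s^2\otimes1-1\otimes s^2)$, $\{\!\{t,s\}\!\}=\alpha(st\otimes1+1\otimes ts)+\mu(s\otimes t-t\otimes s)+\gamma1\otimes1$; Case 3: for $m,\mu=\pm\frac12$: $\{\!\{t,t\}\!\}=\mu(t^2\otimes1-1\otimes t^2)$, $\{\!\{s,s\}\!\}=m(s^2\otimes1-1\otimes s^2)$, $\{\!\{t,s\}\!\}=\mu(st\otimes1-t\otimes s+s\otimes t-1\otimes ts)$; Case 4: for $\alpha,m,\mu=\pm\frac12$: $\{\!\{t,t\}\!\}=\mu(t^2\otimes1-1\otimes t^2)$, $\{\!\{s,s\}\!\}=m(s^2\otimes1-1\otimes s^2)$, $\{\!\{t,s\}\!\}=\alpha(st\otimes1-t\otimes s-s\otimes t+1\otimes ts)$; Case 5: for $n\in\Bbbk^\times$, $\alpha,\mu=\pm\frac12$: $\{\!\{t,t\}\!\}=\mu(t^2\otimes1-1\otimes t^2)$, $\{\!\{s,s\}\!\}=\frac{-1}{4n}(s\otimes1-1\otimes s)+n(s^2\otimes s-s\otimes s^2)$, $\{\!\{t,s\}\!\}=\alpha(st\otimes1-t\otimes s-s\otimes t+1\otimes ts)$; Case 6: for $n\in\Bbbk^\times$, $\mu=\pm\frac12$: $\{\!\{t,t\}\!\}=\mu(t^2\otimes1-1\otimes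 t^2)$, $\{\!\{s,s\}\!\}=\frac{-1}{4n}(s\otimes1-1\otimes s)+n(s^2\otimes s-s\otimes s^2)$, $\{\!\{t,s\}\!\}=\mu(st\otimes1-t\otimes s+s\otimes t-1\otimes ts)$; Case 7: for $n,\nu\in\Bbbk^\times$, $\alpha=\pm\frac12$: $\{\!\{t,t\}\!\}=\frac{-1}{4\nu}(t\otimes1-1\otimes t)+\nu(t^2\otimes t-t\otimes t^2)$, $\{\!\{s,s\}\!\}=\frac{-1}{4n}(s\otimes1-1\otimes s)+n(s^2\otimes s-s\otimes s^2)$, $\{\!\{t,s\}\!\}=\alpha(st\otimes1-t\otimes s-s\otimes t+1\otimes ts)$.
   Context: $\otimes=\otimes_\Bbbk$; Sweedler notation $d=d'\otimes d''$; outer structure $x(d'\otimes d'')y=xd'\otimes d''y$. A double bracket on $A$ is a $\Bbbk$-bilinear map $A\times A\to A\otimes A$ with $\{\!\{a,b\}\!\}=-\{\!\{b,a\}\!\}''\otimes\{\!\{b,a\}\!\}'$ and $\{\!\{a,bc\}\!\}=\{\!\{a,b\}\!\}c+b\{\!\{a,c\}\!\}$; it is determined by its values on $s,t$. Triple bracket: $\{\!\{a,b,c\}\!\}=\{\!\{a,\{\!\{b,c\}\!\}'\}\!\}\otimes\{\!\{b,c\}\!\}''+\tau\{\!\{b,\{\!\{c,a\}\!\}'\}\!\}\otimes\{\!\{c,a\}\!\}''+\tau^2\{\!\{c,\{\!\{a,b\}\!\}'\}\!\}\otimes\{\!\{a,b\}\!\}''$, $\tau(x_1\otimes x_2\otimes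 x_3)=x_3\otimes x_1\otimes x_2$. Quasi-Poisson (over $B=\Bbbk$): $\{\!\{a,b,c\}\!\}=\frac14(ca\otimes b\otimes1-ca\otimes1\otimes b-c\otimes ab\otimes1+c\otimes a\otimes b-a\otimes b\otimes c+a\otimes1\otimes bc+1\otimes ab\otimes c-1\otimes a\otimes bc)$ for all $a,b,c$. Two double quasi-Poisson algebras $(A,\{\!\{\}\!\})$, $(A,\{\!\{\}\!\}')$ over $\Bbbk$ are isomorphic if there is a $\Bbbk$-algebra isomorphism $\psi:A\to A$ with $(\psi\otimes\psi)\{\!\{a,b\}\!\}=\{\!\{\psi(a),\psi(b)\}\!\}'$ for all $a,b$. *)

theory Defs
  imports Main
begin

text \<open>The free algebra k<s,t> is modelled as finitely supported functions from
words over the alphabet {S,T} to the field; A (x) A and A (x) A (x) A as finitely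
supported functions on pairs / triples of words (coefficients w.r.t. the
monomial basis).\<close>

datatype gen = S | T

type_synonym 'k nc = "gen list \<Rightarrow> 'k"
type_synonym 'k nc2 = "gen list \<times> gen list \<Rightarrow> 'k"
type_synonym 'k nc3 = "gen list \<times> gen list \<times> gen list \<Rightarrow> 'k"

definition fin_supp :: "('a \<Rightarrow> 'k::zero) \<Rightarrow> bool" where
  "fin_supp f \<longleftrightarrow> finite {x. f x \<noteq> 0}"

definition ncA :: "'k::zero nc set" where
  "ncA = {p. fin_supp p}"

definition ncadd :: "('a \<Rightarrow> 'k::plus) \<Rightarrow> ('a \<Rightarrow> 'k) \<Rightarrow> 'a \<Rightarrow> 'k" where
  "ncadd p q = (\<lambda>w. p w + q w)"

definition ncsmult :: "'k::times \<Rightarrow> ('a \<Rightarrow> 'k) \<Rightarrow> 'a \<Rightarrow> 'k" where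
  "ncsmult c p = (\<lambda>w. c * p w)"

definition ncneg :: "('a \<Rightarrow> 'k::uminus) \<Rightarrow> 'a \<Rightarrow> 'k" where
  "ncneg p = (\<lambda>w. - p w)"

definition ncmul :: "'k::comm_ring_1 nc \<Rightarrow> 'k nc \<Rightarrow> 'k nc" where
  "ncmul p q = (\<lambda>w. \<Sum>i\<in>{0..length w}. p (take i w) * q (drop i w))"

definition ncone :: "'k::comm_ring_1 nc" where
  "ncone = (\<lambda>w. if w = [] then 1 else 0)"

definition mono :: "gen list \<Rightarrow> 'k::comm_ring_1 nc" where
  "mono u = (\<lambda>w. if w = u then 1 else 0)"

definition ncgen :: "gen \<Rightarrow> 'k::comm_ring_1 nc" where
  "ncgen g = mono [g]"

definition tens2 :: "'k::comm_ring_1 nc \<Rightarrow> 'k nc \<Rightarrow> 'k nc2" where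
  "tens2 x y = (\<lambda>(u, v). x u * y v)"

definition tens3 :: "'k::comm_ring_1 nc \<Rightarrow> 'k nc \<Rightarrow> 'k nc \<Rightarrow> 'k nc3" where
  "tens3 x y z = (\<lambda>(u, v, w). x u * y v * z w)"

text \<open>outer bimodule structure: x (d' (x) d'') = x d' (x) d'',  (d' (x) d'') y = d' (x) d'' y\<close>
definition lmul2 :: "'k::comm_ring_1 nc \<Rightarrow> 'k nc2 \<Rightarrow> 'k nc2" where
  "lmul2 x d = (\<lambda>(u, v). \<Sum>i\<in>{0..length u}. x (take i u) * d (drop i u, v))"

definition rmul2 :: "'k::comm_ring_1 nc2 \<Rightarrow> 'k nc \<Rightarrow> 'k nc2" where
  "rmul2 d y = (\<lambda>(u, v). \<Sum>j\<in>{0..length v}. d (u, take j v) * y (drop j v))"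

definition swap2 :: "'k nc2 \<Rightarrow> 'k nc2" where
  "swap2 d = (\<lambda>(u, v). d (v, u))"

definition is_double_bracket ::
  "('k::field nc \<Rightarrow> 'k nc \<Rightarrow> 'k nc2) \<Rightarrow> bool" where
  "is_double_bracket br \<longleftrightarrow>
     (\<forall>a\<in>ncA. \<forall>b\<in>ncA. fin_supp (br a b)) \<and>
     (\<forall>a\<in>ncA. \<forall>b\<in>ncA. \<forall>c\<in>ncA. br (ncadd a b) c = ncadd (br a c) (br b c)) \<and>
     (\<forall>a\<in>ncA. \<forall>b\<in>ncA. \<forall>c\<in>ncA. br a (ncadd b c) = ncadd (br a b) (br a c)) \<and>
     (\<forall>x. \<forall>a\<in>ncA. \<forall>b\<in>ncA. br (ncsmult x a) b = ncsmult x (br a b)) \<and>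
     (\<forall>x. \<forall>a\<in>ncA. \<forall>b\<in>ncA. br a (ncsmult x b) = ncsmult x (br a b)) \<and>
     (\<forall>a\<in>ncA. \<forall>b\<in>ncA. br a b = ncneg (swap2 (br b a))) \<and>
     (\<forall>a\<in>ncA. \<forall>b\<in>ncA. \<forall>c\<in>ncA.
        br a (ncmul b c) = ncadd (rmul2 (br a b) c) (lmul2 b (br a c)))"

text \<open>{{a, d'}} (x) d'' for d in A (x) A (expanding d in the monomial basis)\<close>
definition brL :: "('k::field nc \<Rightarrow> 'k nc \<Rightarrow> 'k nc2) \<Rightarrow> 'k nc \<Rightarrow> 'k nc2 \<Rightarrow> 'k nc3" where
  "brL br a d = (\<lambda>(x, y, z). \<Sum>p\<in>{p. d p \<noteq> 0}.
       d p * br a (mono (fst p)) (x, y) * (if snd p = z then 1 else 0))"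

text \<open>tau (x1 (x) x2 (x) x3) = x3 (x) x1 (x) x2\<close>
definition tau3 :: "'k nc3 \<Rightarrow> 'k nc3" where
  "tau3 D = (\<lambda>(x, y, z). D (y, z, x))"

definition triple_bracket ::
  "('k::field nc \<Rightarrow> 'k nc \<Rightarrow> 'k nc2) \<Rightarrow> 'k nc \<Rightarrow> 'k nc \<Rightarrow> 'k nc \<Rightarrow> 'k nc3" where
  "triple_bracket br a b c =
     ncadd (brL br a (br b c))
       (ncadd (tau3 (brL br b (br c a))) (tau3 (tau3 (brL br c (br a b)))))"

definition qp_rhs :: "'k::field nc \<Rightarrow> 'k nc \<Rightarrow> 'k nc \<Rightarrow> 'k nc3" where
  "qp_rhs a b c = (\<lambda>p. (1/4) *
     (  tens3 (ncmul c a) b ncone p - tens3 (ncmul c a) ncone b p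
      - tens3 c (ncmul a b) ncone p + tens3 c a b p
      - tens3 a b c p + tens3 a ncone (ncmul b c) p
      + tens3 ncone (ncmul a b) c p - tens3 ncone a (ncmul b c) p))"

definition quasi_poisson :: "('k::field nc \<Rightarrow> 'k nc \<Rightarrow> 'k nc2) \<Rightarrow> bool" where
  "quasi_poisson br \<longleftrightarrow>
     (\<forall>a\<in>ncA. \<forall>b\<in>ncA. \<forall>c\<in>ncA. triple_bracket br a b c = qp_rhs a b c)"

definition is_alg_aut :: "('k::field nc \<Rightarrow> 'k nc) \<Rightarrow> bool" where
  "is_alg_aut \<psi> \<longleftrightarrow> bij_betw \<psi> ncA ncA \<and>
     (\<forall>p\<in>ncA. \<forall>q\<in>ncA. \<psi> (ncadd p q) = ncadd (\<psi> p) (\<psi> q)) \<and>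
     (\<forall>c. \<forall>p\<in>ncA. \<psi> (ncsmult c p) = ncsmult c (\<psi> p)) \<and>
     (\<forall>p\<in>ncA. \<forall>q\<in>ncA. \<psi> (ncmul p q) = ncmul (\<psi> p) (\<psi> q)) \<and>
     \<psi> ncone = ncone"

text \<open>psi (x) psi on A (x) A\<close>
definition tmap2 :: "('k::field nc \<Rightarrow> 'k nc) \<Rightarrow> 'k nc2 \<Rightarrow> 'k nc2" where
  "tmap2 \<psi> d = (\<lambda>(u, v). \<Sum>p\<in>{p. d p \<noteq> 0}.
      d p * \<psi> (mono (fst p)) u * \<psi> (mono (snd p)) v)"

definition isomorphic_dqp ::
  "('k::field nc \<Rightarrow> 'k nc \<Rightarrow> 'k nc2) \<Rightarrow> ('k nc \<Rightarrow> 'k nc \<Rightarrow> 'k nc2) \<Rightarrow> bool" where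
  "isomorphic_dqp br br' \<longleftrightarrow> (\<exists>\<psi>. is_alg_aut \<psi> \<and>
      (\<forall>a\<in>ncA. \<forall>b\<in>ncA. tmap2 \<psi> (br a b) = br' (\<psi> a) (\<psi> b)))"

text \<open>linear combination  sum c * (u (x) v)  of monomial tensors\<close>
definition lc :: "('k::comm_ring_1 \<times> gen list \<times> gen list) list \<Rightarrow> 'k nc2" where
  "lc L = (\<lambda>p. sum_list (map (\<lambda>(c, u, v). if (u, v) = p then c else 0) L))"

abbreviation "tgen \<equiv> ncgen T"
abbreviation "sgen \<equiv> ncgen S"

definition pm_half :: "'k::field \<Rightarrow> bool" where
  "pm_half x \<longleftrightarrow> x = 1/2 \<or> x = -(1/2)"

definition TT_quad :: "'k::field \<Rightarrow> 'k nc2" where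
  "TT_quad \<mu> = lc [(\<mu>, [T,T], []), (-\<mu>, [], [T,T])]"

definition SS_quad :: "'k::field \<Rightarrow> 'k nc2" where
  "SS_quad m = lc [(m, [S,S], []), (-m, [], [S,S])]"

definition SS_cub :: "'k::field \<Rightarrow> 'k nc2" where
  "SS_cub n = lc [(-1/(4*n), [S], []), (1/(4*n), [], [S]),
                  (n, [S,S], [S]), (-n, [S], [S,S])]"

definition TT_cub :: "'k::field \<Rightarrow> 'k nc2" where
  "TT_cub \<nu> = lc [(-1/(4*\<nu>), [T], []), (1/(4*\<nu>), [], [T]),
                  (\<nu>, [T,T], [T]), (-\<nu>, [T], [T,T])]"

definition TS_A :: "'k::field \<Rightarrow> 'k nc2" where
  "TS_A c = lc [(c, [S,T], []), (-c, [T], [S]), (c, [S], [T]), (-c, [], [T,S])]"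

definition TS_B :: "'k::field \<Rightarrow> 'k nc2" where
  "TS_B c = lc [(c, [S,T], []), (-c, [T], [S]), (-c, [S], [T]), (c, [], [T,S])]"

definition normal_form :: "'k::field nc2 \<Rightarrow> 'k nc2 \<Rightarrow> 'k nc2 \<Rightarrow> bool" where
  "normal_form Btt Bss Bts \<longleftrightarrow>
    \<comment> \<open>Case 1\<close>
    (\<exists>\<gamma>0 \<gamma>1 \<mu> \<alpha>. pm_half \<mu> \<and> \<alpha>^2 = 1/4 + \<gamma>0 * \<gamma>1 \<and>
       Btt = TT_quad \<mu> \<and> Bss = SS_quad \<mu> \<and>
       Bts = lc [(\<gamma>0, [T], [T]), (\<gamma>1, [S], [S]), (\<mu>, [S,T], []), (-\<mu>, [], [T,S]),
                 (\<alpha>, [T], [S]), (\<alpha>, [S], [T])]) \<or>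
    \<comment> \<open>Case 2\<close>
    (\<exists>\<gamma> \<alpha> \<mu>. pm_half \<alpha> \<and> pm_half \<mu> \<and>
       Btt = TT_quad \<mu> \<and> Bss = SS_quad (-\<mu>) \<and>
       Bts = lc [(\<alpha>, [S,T], []), (\<alpha>, [], [T,S]), (\<mu>, [S], [T]), (-\<mu>, [T], [S]),
                 (\<gamma>, [], [])]) \<or>
    \<comment> \<open>Case 3\<close>
    (\<exists>m \<mu>. pm_half m \<and> pm_half \<mu> \<and>
       Btt = TT_quad \<mu> \<and> Bss = SS_quad m \<and> Bts = TS_A \<mu>) \<or>
    \<comment> \<open>Case 4\<close>
    (\<exists>\<alpha> m \<mu>. pm_half \<alpha> \<and> pm_half m \<and> pm_half \<mu> \<and>
       Btt = TT_quad \<mu> \<and> Bss = SS_quad m \<and> Bts = TS_B \<alpha>) \<or>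
    \<comment> \<open>Case 5\<close>
    (\<exists>n \<alpha> \<mu>. n \<noteq> 0 \<and> pm_half \<alpha> \<and> pm_half \<mu> \<and>
       Btt = TT_quad \<mu> \<and> Bss = SS_cub n \<and> Bts = TS_B \<alpha>) \<or>
    \<comment> \<open>Case 6\<close>
    (\<exists>n \<mu>. n \<noteq> 0 \<and> pm_half \<mu> \<and>
       Btt = TT_quad \<mu> \<and> Bss = SS_cub n \<and> Bts = TS_A \<mu>) \<or>
    \<comment> \<open>Case 7\<close>
    (\<exists>n \<nu> \<alpha>. n \<noteq> 0 \<and> \<nu> \<noteq> 0 \<and> pm_half \<alpha> \<and>
       Btt = TT_cub \<nu> \<and> Bss = SS_cub n \<and> Bts = TS_B \<alpha>)"

end

theory Submission
  imports Defs
begin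

text \<open>
  Comparing coefficients in the quasi-Poisson identity for the triples \<open>(s, s, t)\<close> and
  \<open>(s, t, t)\<close> gives polynomial equations in the structure constants: the one-sided quadratic
  terms of \<open>{{t, s}}\<close> vanish, \<open>\<alpha>1'\<^sup>2 = \<alpha>3\<^sup>2 = 1/4\<close>, and the linear and constant terms
  of \<open>{{t, s}}\<close> are tied to those of \<open>{{t, t}}\<close> and \<open>{{s, s}}\<close>.
  An affine substitution \<open>t \<mapsto> t - p\<close>, \<open>s \<mapsto> s - q\<close>, possibly followed by exchanging \<open>s\<close>
  and \<open>t\<close>, is an automorphism of \<open>k\<langle>s, t\<rangle>\<close>, and transporting the bracket along it gives
  an isomorphic double bracket. With \<open>p = \<mu>/\<nu>\<close> (or \<open>2\<mu>\<lambda>\<close> if \<open>\<nu> = 0\<close>) and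
  \<open>q = m/n\<close> (or \<open>2ml\<close> if \<open>n = 0\<close>) the brackets \<open>{{t, t}}\<close> and \<open>{{s, s}}\<close> take their
  normal form, and the coefficient equations show that the same shift removes the linear terms
  of \<open>{{t, s}}\<close>. The possible sign patterns of the coefficients \<open>\<plusminus>1/2\<close> then give the seven
  cases; exchanging \<open>s\<close> and \<open>t\<close> reduces the case where only \<open>{{t, t}}\<close> is cubic to the
  case where only \<open>{{s, s}}\<close> is.
\<close>

section \<open>The free algebra and its substitution endomorphisms\<close>

abbreviation supp :: "('a \<Rightarrow> 'k::zero) \<Rightarrow> 'a set" where
  "supp f \<equiv> {x. f x \<noteq> 0}"

lemma ncone_mono: "ncone = mono []"
  by (auto simp: ncone_def mono_def)

lemma mono_apply: "mono u w = (if w = u then 1 else 0)"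
  by (simp add: mono_def)

lemma supp_mono: "supp (mono u :: 'k::comm_ring_1 nc) = {u}"
  by (auto simp: mono_def)

lemma mono_ncA [simp]: "mono u \<in> ncA"
  by (simp add: ncA_def fin_supp_def mono_def)

lemma ncone_ncA [simp]: "ncone \<in> ncA"
  by (simp add: ncone_mono)

lemma ncA_finite_supp: "p \<in> ncA \<Longrightarrow> finite (supp p)"
  by (simp add: ncA_def fin_supp_def)

lemma fin_supp_finite: "fin_supp d \<Longrightarrow> finite (supp d)"
  by (simp add: fin_supp_def)

lemma ncadd_ncA [simp]:
  assumes "p \<in> ncA" "q \<in> ncA" shows "ncadd p q \<in> (ncA :: 'k::comm_ring_1 nc set)"
proof -
  have "supp (ncadd p q) \<subseteq> supp p \<union> supp q" by (auto simp: ncadd_def)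
  thus ?thesis using assms by (auto simp: ncA_def fin_supp_def intro: finite_subset)
qed

lemma ncsmult_ncA [simp]:
  assumes "p \<in> ncA" shows "ncsmult c p \<in> (ncA :: 'k::comm_ring_1 nc set)"
proof -
  have "supp (ncsmult c p) \<subseteq> supp p" by (auto simp: ncsmult_def)
  thus ?thesis using assms by (auto simp: ncA_def fin_supp_def intro: finite_subset)
qed

lemma supp_sum_subset:
  "supp (\<lambda>w. \<Sum>i\<in>I. c i * A i w :: 'k::comm_ring_1) \<subseteq> (\<Union>i\<in>I. supp (A i))"
proof
  fix w assume "w \<in> supp (\<lambda>w. \<Sum>i\<in>I. c i * A i w)"
  then obtain i where "i \<in> I" "A i w \<noteq> 0"
    by (metis (mono_tags, lifting) mem_Collect_eq mult_zero_right sum.neutral)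
  thus "w \<in> (\<Union>i\<in>I. supp (A i))" by blast
qed

lemma fin_supp_sum:
  assumes "finite I" "\<And>i. i \<in> I \<Longrightarrow> fin_supp (A i)"
  shows "fin_supp (\<lambda>w. \<Sum>i\<in>I. c i * A i w :: 'k::comm_ring_1)"
  unfolding fin_supp_def
  by (rule finite_subset[OF supp_sum_subset]) (use assms in \<open>auto simp: fin_supp_def\<close>)

lemma sum_ncA:
  assumes "finite I" "\<And>i. i \<in> I \<Longrightarrow> A i \<in> ncA"
  shows "(\<lambda>w. \<Sum>i\<in>I. c i * A i w :: 'k::comm_ring_1) \<in> ncA"
  using fin_supp_sum[of I A c] assms by (simp add: ncA_def)

lemma sum_mult_mono_apply: "finite X \<Longrightarrow> (\<Sum>u\<in>X. c u * mono u w) = (if w \<in> X then c w else 0)"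
  by (simp add: mono_def sum.delta' if_distrib cong: if_cong)

lemma ncA_eq_sum_mono:
  assumes "p \<in> ncA" "finite X" "supp p \<subseteq> X"
  shows "p = (\<lambda>w. \<Sum>u\<in>X. p u * mono u w)"
proof
  fix w show "p w = (\<Sum>u\<in>X. p u * mono u w)"
    using assms by (auto simp: sum_mult_mono_apply)
qed

lemma ncA_eq_sum_supp: "p \<in> ncA \<Longrightarrow> p = (\<lambda>w. \<Sum>u\<in>supp p. p u * mono u w)"
  by (rule ncA_eq_sum_mono) (auto simp: ncA_finite_supp)

lemma take_drop_eq_iff:
  "i \<le> length w \<Longrightarrow> (take i w = u \<and> drop i w = v) \<longleftrightarrow> (w = u @ v \<and> i = length u)"
  by (auto simp: min_def)

lemma sum_take_drop_delta:
  "(\<Sum>i\<in>{0..length w}. (if take i w = u \<and> drop i w = v then c else 0)) =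
   (if w = u @ v then c else 0)"
proof -
  have "(\<Sum>i\<in>{0..length w}. (if take i w = u \<and> drop i w = v then c else 0)) =
        (\<Sum>i\<in>{0..length w}. (if i = length u then (if w = u @ v then c else 0) else 0))"
    by (rule sum.cong) (auto simp: take_drop_eq_iff)
  also have "\<dots> = (if w = u @ v then c else 0)"
    by (auto simp: sum.delta)
  finally show ?thesis .
qed

lemma ncmul_mono: "ncmul (mono u) (mono v) = (mono (u @ v) :: 'k::comm_ring_1 nc)"
proof
  fix w
  have "ncmul (mono u) (mono v) w =
        (\<Sum>i\<in>{0..length w}. (if take i w = u \<and> drop i w = v then (1::'k) else 0))"
    unfolding ncmul_def mono_def by (intro sum.cong) auto
  also have "\<dots> = mono (u @ v) w" by (simp add: sum_take_drop_delta mono_def)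
  finally show "ncmul (mono u) (mono v) w = (mono (u @ v) w :: 'k)" .
qed

lemma ncmul_sum_left:
  "finite I \<Longrightarrow> ncmul (\<lambda>w. \<Sum>i\<in>I. c i * A i w) q = (\<lambda>w. \<Sum>i\<in>I. c i * ncmul (A i) q w)"
  unfolding ncmul_def
  by (rule ext) (simp add: sum_distrib_right sum_distrib_left mult.assoc, rule sum.swap)

lemma ncmul_sum_right:
  "finite I \<Longrightarrow> ncmul p (\<lambda>w. \<Sum>i\<in>I. c i * A i w) = (\<lambda>w. \<Sum>i\<in>I. c i * ncmul p (A i) w)"
  unfolding ncmul_def
  by (rule ext) (simp add: sum_distrib_right sum_distrib_left mult.assoc mult.left_commute sum.swap[where A=I])

lemma ncmul_add_left: "ncmul (\<lambda>w. p w + q w) r = (\<lambda>w. ncmul p r w + ncmul q r w)"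
  by (rule ext) (simp add: ncmul_def distrib_right sum.distrib)

lemma ncmul_add_right: "ncmul p (\<lambda>w. q w + r w) = (\<lambda>w. ncmul p q w + ncmul p r w)"
  by (rule ext) (simp add: ncmul_def distrib_left sum.distrib)

lemma ncmul_zero_left: "ncmul (\<lambda>w. 0) r = (\<lambda>w. 0)"
  by (rule ext) (simp add: ncmul_def)

lemma ncmul_zero_right: "ncmul p (\<lambda>w. 0) = (\<lambda>w. 0)"
  by (rule ext) (simp add: ncmul_def)

lemma ncmul_smult_left: "ncmul (\<lambda>w. c * p w) r = (\<lambda>w. c * ncmul p r w)"
  by (rule ext) (simp add: ncmul_def sum_distrib_left mult.assoc)

lemma ncmul_smult_right: "ncmul p (\<lambda>w. c * r w) = (\<lambda>w. c * ncmul p r w)"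
  by (rule ext) (simp add: ncmul_def sum_distrib_left mult_ac)

lemma ncmul_mono_left:
  assumes "r \<in> ncA"
  shows "ncmul (mono m) r = (\<lambda>w. \<Sum>z\<in>supp r. r z * mono (m @ z) w)"
proof -
  have "ncmul (mono m) r = ncmul (mono m) (\<lambda>w. \<Sum>z\<in>supp r. r z * mono z w)"
    using ncA_eq_sum_supp[OF assms] by metis
  also have "\<dots> = (\<lambda>w. \<Sum>z\<in>supp r. r z * mono (m @ z) w)"
    using assms by (simp add: ncmul_sum_right ncA_finite_supp ncmul_mono)
  finally show ?thesis .
qed

lemma ncmul_mono_right:
  assumes "p \<in> ncA"
  shows "ncmul p (mono m) = (\<lambda>w. \<Sum>u\<in>supp p. p u * mono (u @ m) w)"
proof -
  have "ncmul p (mono m) = ncmul (\<lambda>w. \<Sum>u\<in>supp p. p u * mono u w) (mono m)"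
    using ncA_eq_sum_supp[OF assms] by metis
  also have "\<dots> = (\<lambda>w. \<Sum>u\<in>supp p. p u * mono (u @ m) w)"
    using assms by (simp add: ncmul_sum_left ncA_finite_supp ncmul_mono)
  finally show ?thesis .
qed

lemma ncmul_eq_sum_mono:
  assumes "p \<in> ncA" "q \<in> ncA"
  shows "ncmul p q = (\<lambda>w. \<Sum>u\<in>supp p. p u * (\<Sum>v\<in>supp q. q v * mono (u @ v) w))"
proof -
  have "ncmul p q = ncmul (\<lambda>w. \<Sum>u\<in>supp p. p u * mono u w) q"
    using ncA_eq_sum_supp[OF assms(1)] by metis
  also have "\<dots> = (\<lambda>w. \<Sum>u\<in>supp p. p u * ncmul (mono u) q w)"
    using assms by (simp add: ncmul_sum_left ncA_finite_supp)
  also have "\<dots> = (\<lambda>w. \<Sum>u\<in>supp p. p u * (\<Sum>v\<in>supp q. q v * mono (u @ v) w))"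
    using assms by (simp add: ncmul_mono_left)
  finally show ?thesis .
qed

lemma ncmul_ncA [simp]:
  assumes "p \<in> ncA" "q \<in> ncA"
  shows "ncmul p q \<in> ncA"
  unfolding ncmul_eq_sum_mono[OF assms]
  by (rule sum_ncA) (use assms in \<open>auto simp: ncA_finite_supp intro!: sum_ncA\<close>)

lemma ncmul_one_left: "p \<in> ncA \<Longrightarrow> ncmul ncone p = p"
  using ncmul_mono_left[of p "[]"] ncA_eq_sum_supp[of p] by (simp add: ncone_mono)

lemma ncmul_one_right: "p \<in> ncA \<Longrightarrow> ncmul p ncone = p"
  using ncmul_mono_right[of p "[]"] ncA_eq_sum_supp[of p] by (simp add: ncone_mono)

lemma ncmul_assoc:
  assumes p: "p \<in> ncA" and q: "q \<in> ncA" and r: "r \<in> ncA"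
  shows "ncmul (ncmul p q) r = ncmul p (ncmul q r)"
proof -
  have fp: "finite (supp p)" and fq: "finite (supp q)" and fr: "finite (supp r)"
    using p q r by (auto simp: ncA_finite_supp)
  let ?m = "\<lambda>u v z w. p u * q v * r z * mono (u @ v @ z) w"
  have "ncmul (ncmul p q) r =
        (\<lambda>w. \<Sum>u\<in>supp p. p u * ncmul (\<lambda>w. \<Sum>v\<in>supp q. q v * mono (u @ v) w) r w)"
    by (simp add: ncmul_eq_sum_mono[OF p q] ncmul_sum_left fp)
  also have "\<dots> = (\<lambda>w. \<Sum>u\<in>supp p. \<Sum>v\<in>supp q. \<Sum>z\<in>supp r. ?m u v z w)"
    by (simp add: ncmul_sum_left fq ncmul_mono_left[OF r] sum_distrib_left mult.assoc)
  also have "\<dots> = (\<lambda>w. \<Sum>v\<in>supp q. \<Sum>z\<in>supp r. \<Sum>u\<in>supp p. ?m u v z w)"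
    by (subst sum.swap) (subst (2) sum.swap, rule refl)
  also have "\<dots> = (\<lambda>w. \<Sum>v\<in>supp q. q v * ncmul p (\<lambda>w. \<Sum>z\<in>supp r. r z * mono (v @ z) w) w)"
    by (simp add: ncmul_sum_right fr ncmul_mono_right[OF p] sum_distrib_left mult_ac)
  also have "\<dots> = ncmul p (ncmul q r)"
    by (simp add: ncmul_eq_sum_mono[OF q r] ncmul_sum_right fq)
  finally show ?thesis .
qed

fun subst_word :: "(gen \<Rightarrow> 'k::comm_ring_1 nc) \<Rightarrow> gen list \<Rightarrow> 'k nc" where
  "subst_word f [] = ncone"
| "subst_word f (g # u) = ncmul (f g) (subst_word f u)"

definition subst :: "(gen \<Rightarrow> 'k::comm_ring_1 nc) \<Rightarrow> 'k nc \<Rightarrow> 'k nc" where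
  "subst f p = (\<lambda>w. \<Sum>u\<in>supp p. p u * subst_word f u w)"

lemma subst_word_ncA [simp]: "\<forall>x. f x \<in> ncA \<Longrightarrow> subst_word f u \<in> ncA"
  by (induction u) auto

lemma subst_word_append:
  "\<forall>x. f x \<in> ncA \<Longrightarrow> subst_word f (u @ v) = ncmul (subst_word f u) (subst_word f v)"
  by (induction u) (auto simp: ncmul_one_left ncmul_assoc)

lemma subst_word_mono: "subst_word (\<lambda>x. mono [x]) u = mono u"
  by (induction u) (auto simp: ncone_mono ncmul_mono)

lemma subst_eq_sum_superset:
  "p \<in> ncA \<Longrightarrow> finite X \<Longrightarrow> supp p \<subseteq> X \<Longrightarrow> subst f p = (\<lambda>w. \<Sum>u\<in>X. p u * subst_word f u w)"
  unfolding subst_def by (rule ext, rule sum.mono_neutral_left) auto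

lemma subst_ncA [simp]: "\<forall>x. f x \<in> ncA \<Longrightarrow> p \<in> ncA \<Longrightarrow> subst f p \<in> ncA"
  unfolding subst_def by (rule sum_ncA) (auto simp: ncA_finite_supp)

lemma sum_sum_mult_swap:
  "finite I \<Longrightarrow> finite U \<Longrightarrow>
   (\<Sum>u\<in>U. (\<Sum>i\<in>I. c i * A i u) * W u :: 'k::comm_ring_1) = (\<Sum>i\<in>I. c i * (\<Sum>u\<in>U. A i u * W u))"
  by (simp add: sum_distrib_right sum_distrib_left mult.assoc) (rule sum.swap)

lemma subst_sum:
  assumes I: "finite I" and A: "\<And>i. i \<in> I \<Longrightarrow> A i \<in> ncA"
  shows "subst f (\<lambda>w. \<Sum>i\<in>I. c i * A i w) = (\<lambda>w. \<Sum>i\<in>I. c i * subst f (A i) w)"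
proof -
  define U where "U = (\<Union>i\<in>I. supp (A i))"
  have U: "finite U" using I A by (auto simp: U_def ncA_finite_supp)
  have "subst f (\<lambda>w. \<Sum>i\<in>I. c i * A i w) = (\<lambda>w. \<Sum>u\<in>U. (\<Sum>i\<in>I. c i * A i u) * subst_word f u w)"
    by (rule subst_eq_sum_superset)
       (use I A U supp_sum_subset[of c A I] in \<open>auto simp: U_def intro: sum_ncA\<close>)
  also have "\<dots> = (\<lambda>w. \<Sum>i\<in>I. c i * (\<Sum>u\<in>U. A i u * subst_word f u w))"
    by (simp add: sum_sum_mult_swap I U)
  also have "\<dots> = (\<lambda>w. \<Sum>i\<in>I. c i * subst f (A i) w)"
  proof (rule ext, rule sum.cong[OF refl])
    fix w i assume "i \<in> I"
    hence "subst f (A i) = (\<lambda>w. \<Sum>u\<in>U. A i u * subst_word f u w)"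
      by (intro subst_eq_sum_superset A U) (auto simp: U_def)
    thus "c i * (\<Sum>u\<in>U. A i u * subst_word f u w) = c i * subst f (A i) w" by simp
  qed
  finally show ?thesis .
qed

lemma subst_mono [simp]: "subst f (mono u) = subst_word f u"
  by (simp add: subst_def supp_mono mono_def)

lemma subst_ncone [simp]: "subst f ncone = ncone"
  by (simp add: ncone_mono)

lemma subst_ncmul:
  assumes f: "\<forall>x. f x \<in> ncA" and p: "p \<in> ncA" and q: "q \<in> ncA"
  shows "subst f (ncmul p q) = ncmul (subst f p) (subst f q)"
proof -
  have fp: "finite (supp p)" and fq: "finite (supp q)" using p q by (auto simp: ncA_finite_supp)
  have "subst f (ncmul p q) =
        (\<lambda>w. \<Sum>u\<in>supp p. p u * subst f (\<lambda>w. \<Sum>v\<in>supp q. q v * mono (u @ v) w) w)"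
    unfolding ncmul_eq_sum_mono[OF p q]
    by (rule subst_sum) (auto simp: fp fq intro!: sum_ncA)
  also have "\<dots> = (\<lambda>w. \<Sum>u\<in>supp p. p u * (\<Sum>v\<in>supp q. q v * ncmul (subst_word f u) (subst_word f v) w))"
    by (simp add: subst_sum fq subst_word_append f)
  also have "\<dots> = ncmul (subst f p) (subst f q)"
    unfolding subst_def by (simp add: ncmul_sum_left ncmul_sum_right fp fq)
  finally show ?thesis .
qed

lemma subst_ncadd:
  assumes p: "p \<in> ncA" and q: "q \<in> ncA"
  shows "subst f (ncadd p q) = ncadd (subst f p) (subst f q)"
proof -
  let ?X = "supp p \<union> supp q"
  have X: "finite ?X" using p q by (auto simp: ncA_finite_supp)
  have "subst f (ncadd p q) = (\<lambda>w. \<Sum>u\<in>?X. ncadd p q u * subst_word f u w)"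
    by (rule subst_eq_sum_superset) (use p q X ncadd_ncA[OF p q] in \<open>auto simp: ncadd_def\<close>)
  moreover have "subst f p = (\<lambda>w. \<Sum>u\<in>?X. p u * subst_word f u w)"
    and "subst f q = (\<lambda>w. \<Sum>u\<in>?X. q u * subst_word f u w)"
    by (rule subst_eq_sum_superset; use p q X in auto)+
  ultimately show ?thesis by (simp add: ncadd_def sum.distrib distrib_right)
qed

lemma subst_ncsmult:
  assumes p: "p \<in> ncA"
  shows "subst f (ncsmult c p) = ncsmult c (subst f p)"
proof -
  have X: "finite (supp p)" using p by (auto simp: ncA_finite_supp)
  have "subst f (ncsmult c p) = (\<lambda>w. \<Sum>u\<in>supp p. ncsmult c p u * subst_word f u w)"
    by (rule subst_eq_sum_superset) (use p X ncsmult_ncA[OF p, of c] in \<open>auto simp: ncsmult_def\<close>)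
  thus ?thesis by (simp add: subst_def ncsmult_def sum_distrib_left mult.assoc)
qed

lemma subst_subst_word:
  "\<forall>x. f x \<in> ncA \<Longrightarrow> \<forall>x. g x \<in> ncA \<Longrightarrow> subst f (subst_word g u) = subst_word (\<lambda>x. subst f (g x)) u"
  by (induction u) (auto simp: subst_ncmul)

lemma subst_subst:
  assumes f: "\<forall>x. f x \<in> ncA" and g: "\<forall>x. g x \<in> ncA" and p: "p \<in> ncA"
  shows "subst f (subst g p) = subst (\<lambda>x. subst f (g x)) p"
proof -
  have "subst f (subst g p) = (\<lambda>w. \<Sum>u\<in>supp p. p u * subst f (subst_word g u) w)"
    unfolding subst_def[of g] by (rule subst_sum) (use p g in \<open>auto simp: ncA_finite_supp\<close>)
  thus ?thesis by (simp add: subst_subst_word f g subst_def[of "\<lambda>x. subst f (g x)"])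
qed

lemma subst_id: "p \<in> ncA \<Longrightarrow> subst (\<lambda>x. mono [x]) p = p"
  unfolding subst_def subst_word_mono by (rule sym[OF ncA_eq_sum_supp])

lemma subst_inverse:
  assumes "\<forall>x. f x \<in> ncA" "\<forall>x. g x \<in> ncA" "\<And>x. subst f (g x) = mono [x]" "p \<in> ncA"
  shows "subst f (subst g p) = p"
  using assms by (simp add: subst_subst subst_id)

lemma is_alg_aut_subst:
  assumes f: "\<forall>x. f x \<in> ncA" and g: "\<forall>x. g x \<in> ncA"
    and fg: "\<And>x. subst f (g x) = mono [x]" and gf: "\<And>x. subst g (f x) = mono [x]"
  shows "is_alg_aut (subst f :: 'k::field nc \<Rightarrow> _)"
  unfolding is_alg_aut_def
proof (intro conjI ballI allI)
  show "bij_betw (subst f) ncA ncA"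
    by (rule bij_betw_byWitness[where f'="subst g"]) (auto simp: f g subst_inverse fg gf)
qed (auto simp: subst_ncadd subst_ncsmult subst_ncmul f)

section \<open>Transport of double brackets along automorphisms\<close>

lemma tens2_fin_supp:
  assumes "a \<in> ncA" "b \<in> ncA" shows "fin_supp (tens2 a b :: 'k::comm_ring_1 nc2)"
proof -
  have "supp (tens2 a b) \<subseteq> supp a \<times> supp b" by (auto simp: tens2_def)
  thus ?thesis using assms by (auto simp: fin_supp_def ncA_finite_supp intro: finite_subset)
qed

lemma tens2_mono_apply: "tens2 (mono a) (mono b) p = (if (a, b) = p then 1 else 0)"
  by (cases p) (auto simp: tens2_def mono_def)

lemma fin_supp_eq_sum_tens2:
  assumes "fin_supp (d :: 'k::comm_ring_1 nc2)"
  shows "d = (\<lambda>x. \<Sum>p\<in>supp d. d p * tens2 (mono (fst p)) (mono (snd p)) x)"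
proof
  fix x :: "gen list \<times> gen list"
  have "(\<Sum>p\<in>supp d. d p * tens2 (mono (fst p)) (mono (snd p)) x) = (\<Sum>p\<in>supp d. if p = x then d p else 0)"
    by (rule sum.cong) (auto simp: tens2_mono_apply)
  also have "\<dots> = d x" using assms by (auto simp: fin_supp_def)
  finally show "d x = (\<Sum>p\<in>supp d. d p * tens2 (mono (fst p)) (mono (snd p)) x)" by simp
qed

lemma tmap2_eq_sum:
  "tmap2 \<psi> d = (\<lambda>x. \<Sum>p\<in>supp d. d p * tens2 (\<psi> (mono (fst p))) (\<psi> (mono (snd p))) x)"
  by (rule ext) (auto simp: tmap2_def tens2_def mult.assoc split: prod.split)

lemma tmap2_eq_sum_superset:
  assumes "finite X" "supp d \<subseteq> X"
  shows "tmap2 \<psi> d = (\<lambda>x. \<Sum>p\<in>X. d p * tens2 (\<psi> (mono (fst p))) (\<psi> (mono (snd p))) x)"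
  unfolding tmap2_eq_sum by (rule ext, rule sum.mono_neutral_left) (use assms in auto)

lemma tmap2_sum:
  assumes I: "finite I" and E: "\<And>i. i \<in> I \<Longrightarrow> fin_supp (E i)"
  shows "tmap2 \<psi> (\<lambda>x. \<Sum>i\<in>I. c i * E i x) = (\<lambda>x. \<Sum>i\<in>I. c i * tmap2 \<psi> (E i) x)"
proof -
  define U where "U = (\<Union>i\<in>I. supp (E i))"
  have U: "finite U" using I E by (auto simp: U_def fin_supp_def)
  let ?t = "\<lambda>p. tens2 (\<psi> (mono (fst p))) (\<psi> (mono (snd p)))"
  have "tmap2 \<psi> (\<lambda>x. \<Sum>i\<in>I. c i * E i x) = (\<lambda>x. \<Sum>p\<in>U. (\<Sum>i\<in>I. c i * E i p) * ?t p x)"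
    by (rule tmap2_eq_sum_superset) (use U supp_sum_subset[of c E I] in \<open>auto simp: U_def\<close>)
  also have "\<dots> = (\<lambda>x. \<Sum>i\<in>I. c i * (\<Sum>p\<in>U. E i p * ?t p x))"
    by (simp add: sum_sum_mult_swap I U)
  also have "\<dots> = (\<lambda>x. \<Sum>i\<in>I. c i * tmap2 \<psi> (E i) x)"
  proof (rule ext, rule sum.cong[OF refl])
    fix x i assume "i \<in> I"
    hence "tmap2 \<psi> (E i) = (\<lambda>x. \<Sum>p\<in>U. E i p * ?t p x)"
      by (intro tmap2_eq_sum_superset U) (auto simp: U_def)
    thus "c i * (\<Sum>p\<in>U. E i p * ?t p x) = c i * tmap2 \<psi> (E i) x" by simp
  qed
  finally show ?thesis .
qed

lemma tmap2_ncadd: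
  assumes d: "fin_supp d" and e: "fin_supp e"
  shows "tmap2 \<psi> (ncadd d e) = ncadd (tmap2 \<psi> d) (tmap2 \<psi> e)"
proof -
  have X: "finite (supp d \<union> supp e)" using d e by (auto simp: fin_supp_def)
  show ?thesis
    by (subst (1 2 3) tmap2_eq_sum_superset[OF X]) (auto simp: ncadd_def sum.distrib distrib_right)
qed

lemma tmap2_ncsmult:
  assumes d: "fin_supp d"
  shows "tmap2 \<psi> (ncsmult c d) = ncsmult c (tmap2 \<psi> d)"
proof -
  have X: "finite (supp d)" using d by (auto simp: fin_supp_def)
  show ?thesis
    by (subst (1 2) tmap2_eq_sum_superset[OF X]) (auto simp: ncsmult_def sum_distrib_left mult.assoc)
qed

lemma tmap2_tens2_mono: "tmap2 \<psi> (tens2 (mono a) (mono b)) = tens2 (\<psi> (mono a)) (\<psi> (mono b))"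
proof -
  have "supp (tens2 (mono a) (mono b) :: 'k::field nc2) = {(a, b)}"
    by (auto simp: tens2_mono_apply split: if_splits)
  thus ?thesis unfolding tmap2_eq_sum by (simp add: tens2_mono_apply)
qed

lemma tmap2_ncneg_swap2:
  assumes d: "fin_supp d"
  shows "tmap2 \<psi> (ncneg (swap2 d)) = ncneg (swap2 (tmap2 \<psi> d))"
proof -
  have fd: "finite (supp d)" using d by (rule fin_supp_finite)
  have "ncneg (swap2 d) = (\<lambda>x. \<Sum>p\<in>supp d. (- d p) * tens2 (mono (snd p)) (mono (fst p)) x)"
    by (subst (1) fin_supp_eq_sum_tens2[OF d]) (auto simp: ncneg_def swap2_def tens2_def sum_negf mult_ac)
  hence "tmap2 \<psi> (ncneg (swap2 d)) =
         (\<lambda>x. \<Sum>p\<in>supp d. (- d p) * tmap2 \<psi> (tens2 (mono (snd p)) (mono (fst p))) x)"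
    by (simp only:) (rule tmap2_sum; simp add: fd tens2_fin_supp)
  also have "\<dots> = ncneg (swap2 (tmap2 \<psi> d))"
    unfolding tmap2_tens2_mono unfolding tmap2_eq_sum
    by (rule ext) (auto simp: ncneg_def swap2_def tens2_def sum_negf mult_ac)
  finally show ?thesis .
qed

lemma tmap2_subst_tens2:
  assumes a: "a \<in> ncA" and b: "b \<in> ncA"
  shows "tmap2 (subst f) (tens2 a b) = tens2 (subst f a) (subst f b)"
proof -
  have X: "finite (supp a \<times> supp b)" using a b by (auto simp: ncA_finite_supp)
  have "tmap2 (subst f) (tens2 a b) =
    (\<lambda>x. \<Sum>p\<in>supp a \<times> supp b. tens2 a b p * tens2 (subst_word f (fst p)) (subst_word f (snd p)) x)"
    by (subst tmap2_eq_sum_superset[OF X]) (auto simp: tens2_def)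
  also have "\<dots> = tens2 (subst f a) (subst f b)"
    by (rule ext) (auto simp: tens2_def subst_def sum_product sum.cartesian_product mult_ac
        intro!: sum.cong split: prod.split)
  finally show ?thesis .
qed

lemma tmap2_subst_fin_supp:
  assumes f: "\<forall>x. f x \<in> ncA" and d: "fin_supp d"
  shows "fin_supp (tmap2 (subst f) d)"
  unfolding tmap2_eq_sum
  by (rule fin_supp_sum) (use d f in \<open>auto simp: fin_supp_def intro!: tens2_fin_supp[unfolded fin_supp_def]\<close>)

lemma rmul2_apply: "rmul2 d y (u, v) = ncmul (\<lambda>z. d (u, z)) y v"
  by (simp add: rmul2_def ncmul_def)

lemma lmul2_apply: "lmul2 y d (u, v) = ncmul y (\<lambda>z. d (z, v)) u"
  by (simp add: lmul2_def ncmul_def)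

lemma rmul2_sum:
  "finite I \<Longrightarrow> rmul2 (\<lambda>x. \<Sum>i\<in>I. c i * E i x) y = (\<lambda>x. \<Sum>i\<in>I. c i * rmul2 (E i) y x)"
  by (rule ext) (auto simp: rmul2_apply ncmul_sum_left[where A="\<lambda>i z. E i (_, z)"])

lemma lmul2_sum:
  "finite I \<Longrightarrow> lmul2 y (\<lambda>x. \<Sum>i\<in>I. c i * E i x) = (\<lambda>x. \<Sum>i\<in>I. c i * lmul2 y (E i) x)"
  by (rule ext) (auto simp: lmul2_apply ncmul_sum_right[where A="\<lambda>i z. E i (z, _)"])

lemma rmul2_tens2: "rmul2 (tens2 a b) y = tens2 a (ncmul b y)"
  by (rule ext) (auto simp: rmul2_def tens2_def ncmul_def sum_distrib_left mult.assoc)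

lemma lmul2_tens2: "lmul2 y (tens2 a b) = tens2 (ncmul y a) b"
  by (rule ext) (auto simp: lmul2_def tens2_def ncmul_def sum_distrib_right sum_distrib_left mult_ac)

lemma rmul2_eq_sum:
  assumes "fin_supp d"
  shows "rmul2 d y = (\<lambda>x. \<Sum>p\<in>supp d. d p * tens2 (mono (fst p)) (ncmul (mono (snd p)) y) x)"
  by (subst fin_supp_eq_sum_tens2[OF assms]) (simp add: rmul2_sum fin_supp_finite[OF assms] rmul2_tens2)

lemma lmul2_eq_sum:
  assumes "fin_supp d"
  shows "lmul2 y d = (\<lambda>x. \<Sum>p\<in>supp d. d p * tens2 (ncmul y (mono (fst p))) (mono (snd p)) x)"
  by (subst fin_supp_eq_sum_tens2[OF assms]) (simp add: lmul2_sum fin_supp_finite[OF assms] lmul2_tens2)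

lemma rmul2_fin_supp: "fin_supp d \<Longrightarrow> y \<in> ncA \<Longrightarrow> fin_supp (rmul2 d y)"
  unfolding rmul2_eq_sum by (rule fin_supp_sum) (auto simp: fin_supp_finite intro: tens2_fin_supp)

lemma lmul2_fin_supp: "fin_supp d \<Longrightarrow> y \<in> ncA \<Longrightarrow> fin_supp (lmul2 y d)"
  unfolding lmul2_eq_sum by (rule fin_supp_sum) (auto simp: fin_supp_finite intro: tens2_fin_supp)

lemma tmap2_subst_rmul2:
  assumes f: "\<forall>x. f x \<in> ncA" and d: "fin_supp d" and y: "y \<in> ncA"
  shows "tmap2 (subst f) (rmul2 d y) = rmul2 (tmap2 (subst f) d) (subst f y)"
proof -
  have fd: "finite (supp d)" using d by (rule fin_supp_finite)
  have "tmap2 (subst f) (rmul2 d y) =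
     (\<lambda>x. \<Sum>p\<in>supp d. d p * tmap2 (subst f) (tens2 (mono (fst p)) (ncmul (mono (snd p)) y)) x)"
    unfolding rmul2_eq_sum[OF d] by (rule tmap2_sum) (use fd y in \<open>auto intro: tens2_fin_supp\<close>)
  also have "\<dots> = (\<lambda>x. \<Sum>p\<in>supp d. d p *
                    rmul2 (tens2 (subst_word f (fst p)) (subst_word f (snd p))) (subst f y) x)"
    by (simp add: tmap2_subst_tens2 y rmul2_tens2 subst_ncmul f)
  also have "\<dots> = rmul2 (tmap2 (subst f) d) (subst f y)"
    unfolding tmap2_eq_sum by (simp add: rmul2_sum fd)
  finally show ?thesis .
qed

lemma tmap2_subst_lmul2:
  assumes f: "\<forall>x. f x \<in> ncA" and d: "fin_supp d" and y: "y \<in> ncA"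
  shows "tmap2 (subst f) (lmul2 y d) = lmul2 (subst f y) (tmap2 (subst f) d)"
proof -
  have fd: "finite (supp d)" using d by (rule fin_supp_finite)
  have "tmap2 (subst f) (lmul2 y d) =
     (\<lambda>x. \<Sum>p\<in>supp d. d p * tmap2 (subst f) (tens2 (ncmul y (mono (fst p))) (mono (snd p))) x)"
    unfolding lmul2_eq_sum[OF d] by (rule tmap2_sum) (use fd y in \<open>auto intro: tens2_fin_supp\<close>)
  also have "\<dots> = (\<lambda>x. \<Sum>p\<in>supp d. d p *
                    lmul2 (subst f y) (tens2 (subst_word f (fst p)) (subst_word f (snd p))) x)"
    by (simp add: tmap2_subst_tens2 y lmul2_tens2 subst_ncmul f)
  also have "\<dots> = lmul2 (subst f y) (tmap2 (subst f) d)"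
    unfolding tmap2_eq_sum by (simp add: lmul2_sum fd)
  finally show ?thesis .
qed

lemma rmul2_ncone: "rmul2 d ncone = (d :: 'k::comm_ring_1 nc2)"
proof (rule ext, clarify)
  fix u v
  have "(\<Sum>j\<in>{0..length v}. d (u, take j v) * (if drop j v = [] then 1 else 0)) =
        (\<Sum>j\<in>{0..length v}. if j = length v then d (u, take j v) else 0)"
    by (rule sum.cong) auto
  thus "rmul2 d ncone (u, v) = d (u, v)" by (simp add: rmul2_def ncone_def)
qed

lemma lmul2_ncone: "lmul2 ncone d = (d :: 'k::comm_ring_1 nc2)"
proof (rule ext, clarify)
  fix u v
  have "(\<Sum>i\<in>{0..length u}. (if take i u = [] then 1 else 0) * d (drop i u, v)) =
        (\<Sum>i\<in>{0..length u}. if i = 0 then d (drop i u, v) else 0)"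
    by (rule sum.cong) auto
  thus "lmul2 ncone d (u, v) = d (u, v)" by (simp add: lmul2_def ncone_def)
qed

lemma double_bracket_ncone_right:
  assumes db: "is_double_bracket br" and a: "a \<in> ncA"
  shows "br a ncone = (\<lambda>x. 0)"
proof -
  have "br a (ncmul ncone ncone) = ncadd (rmul2 (br a ncone) ncone) (lmul2 ncone (br a ncone))"
    using db a ncone_ncA unfolding is_double_bracket_def by blast
  hence "br a ncone = ncadd (br a ncone) (br a ncone)"
    by (simp only: ncmul_one_left[OF ncone_ncA] rmul2_ncone lmul2_ncone)
  hence "\<forall>x. br a ncone x = br a ncone x + br a ncone x" by (metis ncadd_def)
  thus ?thesis by (intro ext) (metis add_cancel_right_right)
qed

lemma double_bracket_ncone_left:
  assumes db: "is_double_bracket br" and a: "a \<in> ncA"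
  shows "br ncone a = (\<lambda>x. 0)"
proof -
  have "br ncone a = ncneg (swap2 (br a ncone))"
    using db a ncone_ncA unfolding is_double_bracket_def by blast
  thus ?thesis using double_bracket_ncone_right[OF db a] by (simp add: ncneg_def swap2_def split_def)
qed

definition transport ::
  "(gen \<Rightarrow> 'k::field nc) \<Rightarrow> (gen \<Rightarrow> 'k nc) \<Rightarrow> ('k nc \<Rightarrow> 'k nc \<Rightarrow> 'k nc2) \<Rightarrow> 'k nc \<Rightarrow> 'k nc \<Rightarrow> 'k nc2"
  where "transport f g br = (\<lambda>a b. tmap2 (subst f) (br (subst g a) (subst g b)))"

locale inverse_substs =
  fixes f g :: "gen \<Rightarrow> 'k::field nc"
  assumes f: "\<forall>x. f x \<in> ncA" and g: "\<forall>x. g x \<in> ncA"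
    and fg: "\<And>x. subst f (g x) = mono [x]" and gf: "\<And>x. subst g (f x) = mono [x]"
begin

lemma subst_fg: "p \<in> ncA \<Longrightarrow> subst f (subst g p) = p"
  by (rule subst_inverse[OF f g fg])

lemma subst_gf: "p \<in> ncA \<Longrightarrow> subst g (subst f p) = p"
  by (rule subst_inverse[OF g f gf])

lemma is_double_bracket_transport:
  assumes db: "is_double_bracket br"
  shows "is_double_bracket (transport f g br)"
proof -
  note D = db[unfolded is_double_bracket_def]
  have fs: "\<And>a b. a \<in> ncA \<Longrightarrow> b \<in> ncA \<Longrightarrow> fin_supp (br a b)"
   and addL: "\<And>a b c. a \<in> ncA \<Longrightarrow> b \<in> ncA \<Longrightarrow> c \<in> ncA \<Longrightarrow> br (ncadd a b) c = ncadd (br a c) (br b c)"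
   and addR: "\<And>a b c. a \<in> ncA \<Longrightarrow> b \<in> ncA \<Longrightarrow> c \<in> ncA \<Longrightarrow> br a (ncadd b c) = ncadd (br a b) (br a c)"
   and smL: "\<And>x a b. a \<in> ncA \<Longrightarrow> b \<in> ncA \<Longrightarrow> br (ncsmult x a) b = ncsmult x (br a b)"
   and smR: "\<And>x a b. a \<in> ncA \<Longrightarrow> b \<in> ncA \<Longrightarrow> br a (ncsmult x b) = ncsmult x (br a b)"
   and asym: "\<And>a b. a \<in> ncA \<Longrightarrow> b \<in> ncA \<Longrightarrow> br a b = ncneg (swap2 (br b a))"
   and leib: "\<And>a b c. a \<in> ncA \<Longrightarrow> b \<in> ncA \<Longrightarrow> c \<in> ncA \<Longrightarrow>
                br a (ncmul b c) = ncadd (rmul2 (br a b) c) (lmul2 b (br a c))"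
    using D by blast+
  have gA: "\<And>a. a \<in> ncA \<Longrightarrow> subst g a \<in> ncA" using g by simp
  show ?thesis unfolding is_double_bracket_def transport_def
  proof (intro conjI ballI allI)
    fix a b :: "'k nc" assume "a \<in> ncA" "b \<in> ncA"
    thus "fin_supp (tmap2 (subst f) (br (subst g a) (subst g b)))"
      by (intro tmap2_subst_fin_supp f fs gA)
  next
    fix a b c :: "'k nc" assume a: "a \<in> ncA" and b: "b \<in> ncA" and c: "c \<in> ncA"
    show "tmap2 (subst f) (br (subst g (ncadd a b)) (subst g c)) =
          ncadd (tmap2 (subst f) (br (subst g a) (subst g c))) (tmap2 (subst f) (br (subst g b) (subst g c)))"
      using a b c by (simp add: subst_ncadd tmap2_ncadd fs gA addL)
    show "tmap2 (subst f) (br (subst g a) (subst g (ncadd b c))) =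
          ncadd (tmap2 (subst f) (br (subst g a) (subst g b))) (tmap2 (subst f) (br (subst g a) (subst g c)))"
      using a b c by (simp add: subst_ncadd tmap2_ncadd fs gA addR)
    have "br (subst g a) (subst g (ncmul b c)) =
          ncadd (rmul2 (br (subst g a) (subst g b)) (subst g c)) (lmul2 (subst g b) (br (subst g a) (subst g c)))"
      using a b c by (simp add: subst_ncmul g gA leib)
    thus "tmap2 (subst f) (br (subst g a) (subst g (ncmul b c))) =
          ncadd (rmul2 (tmap2 (subst f) (br (subst g a) (subst g b))) c)
                (lmul2 b (tmap2 (subst f) (br (subst g a) (subst g c))))"
      using a b c
      by (simp add: tmap2_ncadd rmul2_fin_supp lmul2_fin_supp fs gA tmap2_subst_rmul2 tmap2_subst_lmul2 f subst_fg)
  next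
    fix x :: 'k and a b :: "'k nc" assume a: "a \<in> ncA" and b: "b \<in> ncA"
    show "tmap2 (subst f) (br (subst g (ncsmult x a)) (subst g b)) =
          ncsmult x (tmap2 (subst f) (br (subst g a) (subst g b)))"
      using a b by (simp add: subst_ncsmult tmap2_ncsmult fs gA smL)
    show "tmap2 (subst f) (br (subst g a) (subst g (ncsmult x b))) =
          ncsmult x (tmap2 (subst f) (br (subst g a) (subst g b)))"
      using a b by (simp add: subst_ncsmult tmap2_ncsmult fs gA smR)
  next
    fix a b :: "'k nc" assume a: "a \<in> ncA" and b: "b \<in> ncA"
    show "tmap2 (subst f) (br (subst g a) (subst g b)) =
          ncneg (swap2 (tmap2 (subst f) (br (subst g b) (subst g a))))"
      using a b by (subst asym) (simp_all add: tmap2_ncneg_swap2 fs gA)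
  qed
qed

lemma isomorphic_dqp_transport: "isomorphic_dqp br (transport f g br)"
  unfolding isomorphic_dqp_def
proof (intro exI conjI ballI)
  show "is_alg_aut (subst f)" by (rule is_alg_aut_subst[OF f g fg gf])
  fix a b :: "'k nc" assume "a \<in> ncA" "b \<in> ncA"
  thus "tmap2 (subst f) (br a b) = transport f g br (subst f a) (subst f b)"
    by (simp add: transport_def subst_gf)
qed

end

definition lc_keys :: "('k \<times> gen list \<times> gen list) list \<Rightarrow> (gen list \<times> gen list) list" where
  "lc_keys L = map (\<lambda>(c, u, v). (u, v)) L"

lemma lc_Nil [simp]: "lc [] p = 0"
  by (simp add: lc_def)

lemma lc_Cons [simp]: "lc ((c, u, v) # L) p = (if (u, v) = p then c else 0) + lc L p"
  by (simp add: lc_def)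

lemma lc_append [simp]: "lc (L1 @ L2) p = lc L1 p + lc L2 p"
  by (simp add: lc_def)

lemma lc_eq_sum_list: "lc L p = sum_list (map (\<lambda>(c, u, v). c * (if (u, v) = p then 1 else 0)) L)"
  by (induction L) auto

lemma ncadd_lc: "ncadd (lc L1) (lc L2) = lc (L1 @ L2)"
  by (rule ext) (simp add: ncadd_def)

lemma lc_notin_keys: "p \<notin> set (lc_keys L) \<Longrightarrow> lc L p = 0"
  by (induction L) (auto simp: lc_keys_def)

lemma supp_lc: "supp (lc L) \<subseteq> set (lc_keys L)"
  using lc_notin_keys by blast

lemma lc_fin_supp [simp]: "fin_supp (lc L)"
  unfolding fin_supp_def by (rule finite_subset[OF supp_lc]) simp

lemma lc_eqI:
  assumes "set (lc_keys L1) \<subseteq> set K" "set (lc_keys L2) \<subseteq> set K" "list_all (\<lambda>p. lc L1 p = lc L2 p) K"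
  shows "lc L1 = lc L2"
proof
  fix p show "lc L1 p = lc L2 p"
  proof (cases "p \<in> set K")
    case True thus ?thesis using assms(3) by (simp add: list_all_iff)
  next
    case False
    hence "p \<notin> set (lc_keys L1)" "p \<notin> set (lc_keys L2)" using assms(1,2) by auto
    thus ?thesis by (simp add: lc_notin_keys)
  qed
qed

lemma sum_lc_superset:
  assumes "finite X" "set (lc_keys L) \<subseteq> X"
  shows "(\<Sum>p\<in>X. lc L p * G p) = sum_list (map (\<lambda>(c, u, v). c * G (u, v)) L)"
  using assms(2)
proof (induction L)
  case Nil thus ?case by simp
next
  case (Cons a L)
  obtain c u v where a: "a = (c, u, v)" by (cases a)
  have uv: "(u, v) \<in> X" using Cons.prems a by (auto simp: lc_keys_def)
  have "\<And>p. lc (a # L) p * G p = (if (u, v) = p then c * G p else 0) + lc L p * G p"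
    by (simp add: a distrib_right)
  hence "(\<Sum>p\<in>X. lc (a # L) p * G p) = (\<Sum>p\<in>X. (if (u, v) = p then c * G p else 0)) + (\<Sum>p\<in>X. lc L p * G p)"
    by (simp add: sum.distrib)
  also have "\<dots> = c * G (u, v) + sum_list (map (\<lambda>(c, u, v). c * G (u, v)) L)"
    using uv assms(1) Cons by (simp add: lc_keys_def split_def)
  finally show ?case by (simp add: a split_def)
qed

lemma sum_lc: "(\<Sum>p\<in>supp (lc L). lc L p * G p) = sum_list (map (\<lambda>(c, u, v). c * G (u, v)) L)"
proof -
  have "(\<Sum>p\<in>supp (lc L). lc L p * G p) = (\<Sum>p\<in>set (lc_keys L). lc L p * G p)"
    by (rule sum.mono_neutral_left) (auto simp: supp_lc)
  thus ?thesis by (simp add: sum_lc_superset)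
qed

definition lc_neg_swap :: "('k::field \<times> gen list \<times> gen list) list \<Rightarrow> ('k \<times> gen list \<times> gen list) list" where
  "lc_neg_swap L = map (\<lambda>(c, u, v). (- c, v, u)) L"

lemma ncneg_swap2_lc: "ncneg (swap2 (lc L)) = lc (lc_neg_swap L)"
  by (rule ext) (induction L, auto simp: ncneg_def swap2_def lc_neg_swap_def lc_def split: prod.splits)

lemma rmul2_lc_mono: "rmul2 (lc L) (mono w) = lc (map (\<lambda>(c, a, b). (c, a, b @ w)) L)"
proof
  fix p
  have "rmul2 (lc L) (mono w) p = (\<Sum>q\<in>supp (lc L). lc L q * tens2 (mono (fst q)) (mono (snd q @ w)) p)"
    by (simp add: rmul2_eq_sum ncmul_mono)
  also have "\<dots> = lc (map (\<lambda>(c, a, b). (c, a, b @ w)) L) p"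
    by (simp add: sum_lc lc_eq_sum_list[of "map _ L"] tens2_mono_apply split_def o_def)
  finally show "rmul2 (lc L) (mono w) p = lc (map (\<lambda>(c, a, b). (c, a, b @ w)) L) p" .
qed

lemma lmul2_lc_mono: "lmul2 (mono w) (lc L) = lc (map (\<lambda>(c, a, b). (c, w @ a, b)) L)"
proof
  fix p
  have "lmul2 (mono w) (lc L) p = (\<Sum>q\<in>supp (lc L). lc L q * tens2 (mono (w @ fst q)) (mono (snd q)) p)"
    by (simp add: lmul2_eq_sum ncmul_mono)
  also have "\<dots> = lc (map (\<lambda>(c, a, b). (c, w @ a, b)) L) p"
    by (simp add: sum_lc lc_eq_sum_list[of "map _ L"] tens2_mono_apply split_def o_def)
  finally show "lmul2 (mono w) (lc L) p = lc (map (\<lambda>(c, a, b). (c, w @ a, b)) L) p" .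
qed

fun gen_word_bracket ::
  "(gen \<Rightarrow> gen \<Rightarrow> ('k \<times> gen list \<times> gen list) list) \<Rightarrow> gen \<Rightarrow> gen list \<Rightarrow> ('k \<times> gen list \<times> gen list) list"
  where
  "gen_word_bracket G x [] = []"
| "gen_word_bracket G x (y # w) =
     map (\<lambda>(c, a, b). (c, a, b @ w)) (G x y) @ map (\<lambda>(c, a, b). (c, y # a, b)) (gen_word_bracket G x w)"

lemma double_bracket_gen_word:
  assumes db: "is_double_bracket br" and G: "\<And>x y. br (mono [x]) (mono [y]) = lc (G x y)"
  shows "br (mono [x]) (mono w) = lc (gen_word_bracket G x w)"
proof (induction w)
  case Nil
  show ?case using double_bracket_ncone_right[OF db mono_ncA, of "[x]"] by (auto simp: ncone_mono fun_eq_iff)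
next
  case (Cons y w)
  have "br (mono [x]) (mono (y # w)) = br (mono [x]) (ncmul (mono [y]) (mono w))"
    by (simp add: ncmul_mono)
  also have "\<dots> = ncadd (rmul2 (br (mono [x]) (mono [y])) (mono w)) (lmul2 (mono [y]) (br (mono [x]) (mono w)))"
    using db unfolding is_double_bracket_def by (meson mono_ncA)
  also have "\<dots> = lc (gen_word_bracket G x (y # w))"
    by (simp add: G Cons rmul2_lc_mono lmul2_lc_mono ncadd_lc)
  finally show ?case .
qed

lemma brL_lc:
  "brL br a (lc L) (x, y, z) =
   sum_list (map (\<lambda>(c, u, v). c * (br a (mono u) (x, y) * (if v = z then 1 else 0))) L)"
  unfolding brL_def
  by (simp add: mult.assoc sum_lc[where G="\<lambda>p. br a (mono (fst p)) (x, y) * (if snd p = z then 1 else 0)"])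

lemma quasi_poisson_coeff:
  assumes db: "is_double_bracket br" and G: "\<And>x y. br (mono [x]) (mono [y]) = lc (G x y)"
    and qp: "quasi_poisson br"
  shows "sum_list (map (\<lambda>(k, u, v). k * (lc (gen_word_bracket G a u) (x, y) * (if v = z then 1 else 0))) (G b c))
       + (sum_list (map (\<lambda>(k, u, v). k * (lc (gen_word_bracket G b u) (y, z) * (if v = x then 1 else 0))) (G c a))
       + sum_list (map (\<lambda>(k, u, v). k * (lc (gen_word_bracket G c u) (z, x) * (if v = y then 1 else 0))) (G a b)))
       = qp_rhs (mono [a]) (mono [b]) (mono [c]) (x, y, z)"
proof -
  have "triple_bracket br (mono [a]) (mono [b]) (mono [c]) (x, y, z) = qp_rhs (mono [a]) (mono [b]) (mono [c]) (x, y, z)"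
    using qp unfolding quasi_poisson_def by simp
  thus ?thesis
    by (simp add: triple_bracket_def ncadd_def tau3_def G brL_lc double_bracket_gen_word[OF db G])
qed

section \<open>Affine changes of generators\<close>

definition lc1 :: "('k::comm_ring_1 \<times> gen list) list \<Rightarrow> 'k nc" where
  "lc1 M = (\<lambda>w. sum_list (map (\<lambda>(c, u). if u = w then c else 0) M))"

lemma lc1_Nil_apply [simp]: "lc1 [] w = 0"
  by (simp add: lc1_def)

lemma lc1_Nil: "lc1 [] = (\<lambda>w. 0)"
  by (simp add: lc1_def)

lemma lc1_Cons: "lc1 ((c, u) # M) = (\<lambda>w. c * mono u w + lc1 M w)"
  by (rule ext) (simp add: lc1_def mono_def)

lemma lc1_Cons_apply [simp]: "lc1 ((c, u) # M) w = (if u = w then c else 0) + lc1 M w"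
  by (simp add: lc1_def)

lemma lc1_append [simp]: "lc1 (M @ N) w = lc1 M w + lc1 N w"
  by (simp add: lc1_def)

lemma lc1_ncA [simp]: "lc1 M \<in> ncA"
proof (induction M)
  case Nil
  show ?case by (simp add: lc1_Nil ncA_def fin_supp_def)
next
  case (Cons a M)
  obtain c u where a: "a = (c, u)" by (cases a)
  have "lc1 (a # M) = ncadd (ncsmult c (mono u)) (lc1 M)"
    by (simp add: a lc1_Cons ncadd_def ncsmult_def)
  thus ?case using Cons by simp
qed

definition lc1_mult :: "('k::comm_ring_1 \<times> gen list) list \<Rightarrow> ('k \<times> gen list) list \<Rightarrow> ('k \<times> gen list) list" where
  "lc1_mult M N = concat (map (\<lambda>(a, v). map (\<lambda>(b, w). (a * b, v @ w)) N) M)"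

lemma ncmul_mono_lc1: "ncmul (mono v) (lc1 N) = lc1 (map (\<lambda>(b, w). (b, v @ w)) N)"
proof (induction N)
  case Nil thus ?case by (simp add: lc1_Nil ncmul_zero_right)
next
  case (Cons a N)
  obtain b w where a: "a = (b, w)" by (cases a)
  show ?case by (simp add: a lc1_Cons ncmul_add_right ncmul_smult_right ncmul_mono Cons)
qed

lemma ncmul_lc1: "ncmul (lc1 M) (lc1 N) = lc1 (lc1_mult M N)"
proof (induction M)
  case Nil thus ?case by (simp add: lc1_Nil ncmul_zero_left lc1_mult_def)
next
  case (Cons a M)
  obtain c v where a: "a = (c, v)" by (cases a)
  have "ncmul (lc1 (a # M)) (lc1 N) = (\<lambda>w. c * lc1 (map (\<lambda>(b, w). (b, v @ w)) N) w + lc1 (lc1_mult M N) w)"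
    by (simp add: a lc1_Cons ncmul_add_left ncmul_smult_left ncmul_mono_lc1 Cons)
  also have "\<dots> = lc1 (lc1_mult (a # M) N)"
  proof
    fix w
    have "c * lc1 (map (\<lambda>(b, w). (b, v @ w)) N) w = lc1 (map (\<lambda>(b, w). (c * b, v @ w)) N) w"
      by (induction N) (auto simp: lc1_Nil algebra_simps)
    thus "c * lc1 (map (\<lambda>(b, w). (b, v @ w)) N) w + lc1 (lc1_mult M N) w = lc1 (lc1_mult (a # M) N) w"
      by (simp add: lc1_mult_def a)
  qed
  finally show ?case .
qed

fun subst_word_list ::
  "(gen \<Rightarrow> ('k::comm_ring_1 \<times> gen list) list) \<Rightarrow> gen list \<Rightarrow> ('k \<times> gen list) list" where
  "subst_word_list F [] = [(1, [])]"
| "subst_word_list F (x # u) = lc1_mult (F x) (subst_word_list F u)"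

lemma subst_word_lc1: "subst_word (\<lambda>x. lc1 (F x)) u = lc1 (subst_word_list F u)"
proof (induction u)
  case Nil show ?case by (rule ext) (simp add: ncone_def lc1_def)
next
  case (Cons x u) thus ?case by (simp add: ncmul_lc1)
qed

lemma subst_lc1: "subst f (lc1 M) = (\<lambda>w. sum_list (map (\<lambda>(a, u). a * subst_word f u w) M))"
proof (induction M)
  case Nil
  show ?case by (simp add: subst_def lc1_def)
next
  case (Cons a M)
  obtain c u where a: "a = (c, u)" by (cases a)
  have "lc1 (a # M) = ncadd (ncsmult c (mono u)) (lc1 M)"
    by (simp add: a lc1_Cons ncadd_def ncsmult_def)
  hence h: "subst f (lc1 (a # M)) = ncadd (ncsmult c (subst_word f u)) (subst f (lc1 M))"
    by (simp add: subst_ncadd subst_ncsmult)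
  show ?case unfolding h Cons.IH by (rule ext) (simp add: a ncadd_def ncsmult_def)
qed

definition lc_tensor ::
  "'k::comm_ring_1 \<Rightarrow> ('k \<times> gen list) list \<Rightarrow> ('k \<times> gen list) list \<Rightarrow> ('k \<times> gen list \<times> gen list) list" where
  "lc_tensor c M N = concat (map (\<lambda>(a, x). map (\<lambda>(b, y). (c * a * b, x, y)) N) M)"

lemma lc_lc_tensor: "lc (lc_tensor c M N) (u, v) = c * lc1 M u * lc1 N v"
proof (induction M)
  case Nil thus ?case by (simp add: lc_tensor_def lc1_def)
next
  case (Cons a M)
  obtain d x where a: "a = (d, x)" by (cases a)
  have "lc (map (\<lambda>(b, y). (c * d * b, x, y)) N) (u, v) = (if x = u then c * d * lc1 N v else 0)"
    by (induction N) (auto simp: lc1_def algebra_simps)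
  thus ?case using Cons by (simp add: lc_tensor_def a algebra_simps)
qed

definition tmap2_list ::
  "(gen \<Rightarrow> ('k::comm_ring_1 \<times> gen list) list) \<Rightarrow> ('k \<times> gen list \<times> gen list) list \<Rightarrow> ('k \<times> gen list \<times> gen list) list"
  where "tmap2_list F L = concat (map (\<lambda>(c, u, v). lc_tensor c (subst_word_list F u) (subst_word_list F v)) L)"

lemma tmap2_subst_lc: "tmap2 (subst (\<lambda>x. lc1 (F x))) (lc L) = lc (tmap2_list F L)"
proof (rule ext, clarify)
  fix u v
  let ?f = "\<lambda>x. lc1 (F x)"
  have "tmap2 (subst ?f) (lc L) (u, v) =
        (\<Sum>p\<in>supp (lc L). lc L p * (subst ?f (mono (fst p)) u * subst ?f (mono (snd p)) v))"
    unfolding tmap2_def by (simp only: mult.assoc split_conv)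
  also have "\<dots> = sum_list (map (\<lambda>(c, a, b). c * (lc1 (subst_word_list F a) u * lc1 (subst_word_list F b) v)) L)"
    by (simp add: sum_lc split_def subst_word_lc1)
  also have "\<dots> = lc (tmap2_list F L) (u, v)"
    by (induction L) (auto simp: tmap2_list_def lc_lc_tensor mult.assoc)
  finally show "tmap2 (subst ?f) (lc L) (u, v) = lc (tmap2_list F L) (u, v)" .
qed

lemma lc1_affine: "lc1 [(1, [x]), (c, [])] = ncadd (mono [x]) (ncsmult c ncone)"
  by (rule ext) (auto simp: ncadd_def ncsmult_def mono_def ncone_def)

lemma double_bracket_affine:
  assumes db: "is_double_bracket br"
  shows "br (lc1 [(1, [x]), (c, [])]) (lc1 [(1, [y]), (d, [])]) = br (mono [x]) (mono [y])"
proof -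
  have addL: "\<And>a b c. a \<in> ncA \<Longrightarrow> b \<in> ncA \<Longrightarrow> c \<in> ncA \<Longrightarrow> br (ncadd a b) c = ncadd (br a c) (br b c)"
   and addR: "\<And>a b c. a \<in> ncA \<Longrightarrow> b \<in> ncA \<Longrightarrow> c \<in> ncA \<Longrightarrow> br a (ncadd b c) = ncadd (br a b) (br a c)"
   and smL: "\<And>x a b. a \<in> ncA \<Longrightarrow> b \<in> ncA \<Longrightarrow> br (ncsmult x a) b = ncsmult x (br a b)"
   and smR: "\<And>x a b. a \<in> ncA \<Longrightarrow> b \<in> ncA \<Longrightarrow> br a (ncsmult x b) = ncsmult x (br a b)"
    using db[unfolded is_double_bracket_def] by blast+
  show ?thesis unfolding lc1_affine
    by (simp add: addL addR smL smR double_bracket_ncone_right[OF db] double_bracket_ncone_left[OF db])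
       (simp add: ncadd_def ncsmult_def)
qed

fun swap_gen :: "bool \<Rightarrow> gen \<Rightarrow> gen" where
  "swap_gen b T = (if b then S else T)"
| "swap_gen b S = (if b then T else S)"

text \<open>\<open>shift_gens b p q\<close> is the substitution \<open>t \<mapsto> t' - p\<close>, \<open>s \<mapsto> s' - q\<close>, where
  \<open>(t', s')\<close> is \<open>(t, s)\<close>, or \<open>(s, t)\<close> if \<open>b\<close>.\<close>

definition shift_gens :: "bool \<Rightarrow> 'k::field \<Rightarrow> 'k \<Rightarrow> gen \<Rightarrow> ('k \<times> gen list) list" where
  "shift_gens b p q x = [(1, [swap_gen b x]), (- (if x = T then p else q), [])]"

definition unshift_gens :: "bool \<Rightarrow> 'k::field \<Rightarrow> 'k \<Rightarrow> gen \<Rightarrow> ('k \<times> gen list) list" where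
  "unshift_gens b p q x = [(1, [swap_gen b x]), ((if swap_gen b x = T then p else q), [])]"

lemma inverse_substs_shift_gens:
  "inverse_substs (\<lambda>x. lc1 (shift_gens b p q x)) (\<lambda>x. lc1 (unshift_gens b p q x))"
proof
  show "\<forall>x. lc1 (shift_gens b p q x) \<in> ncA" "\<forall>x. lc1 (unshift_gens b p q x) \<in> ncA" by auto
  fix x
  show "subst (\<lambda>x. lc1 (shift_gens b p q x)) (lc1 (unshift_gens b p q x)) = mono [x]"
    by (rule ext) (cases x; cases b; auto simp: subst_lc1 subst_word_lc1 unshift_gens_def shift_gens_def
        lc1_mult_def mono_def)
  show "subst (\<lambda>x. lc1 (unshift_gens b p q x)) (lc1 (shift_gens b p q x)) = mono [x]"
    by (rule ext) (cases x; cases b; auto simp: subst_lc1 subst_word_lc1 unshift_gens_def shift_gens_def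
        lc1_mult_def mono_def)
qed

lemma transport_shift_gens:
  assumes db: "is_double_bracket br" and L: "br (mono [swap_gen b x]) (mono [swap_gen b y]) = lc L"
  shows "transport (\<lambda>x. lc1 (shift_gens b p q x)) (\<lambda>x. lc1 (unshift_gens b p q x)) br (mono [x]) (mono [y])
       = lc (tmap2_list (shift_gens b p q) L)"
proof -
  have "subst (\<lambda>x. lc1 (unshift_gens b p q x)) (mono [z]) = lc1 [(1, [swap_gen b z]), ((if swap_gen b z = T then p else q), [])]" for z
    by (simp add: unshift_gens_def ncmul_one_right)
  thus ?thesis unfolding transport_def by (simp add: double_bracket_affine[OF db] L tmap2_subst_lc)
qed

definition self_bracket :: "gen \<Rightarrow> 'k::field \<Rightarrow> 'k \<Rightarrow> 'k \<Rightarrow> ('k \<times> gen list \<times> gen list) list" where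
  "self_bracket x a b c =
     [(a, [x], []), (-a, [], [x]), (b, [x,x], []), (-b, [], [x,x]), (c, [x,x], [x]), (-c, [x], [x,x])]"

definition keys_deg3 :: "gen \<Rightarrow> (gen list \<times> gen list) list" where
  "keys_deg3 x = [([], []), ([x], []), ([], [x]), ([x,x], []), ([x], [x]), ([], [x,x]),
                  ([x,x,x], []), ([x,x], [x]), ([x], [x,x]), ([], [x,x,x])]"

lemma lc_shift_self_bracket:
  assumes r: "r = (if x = T then p else q)"
  shows "lc (tmap2_list (shift_gens b p q) (self_bracket x a c d)) =
         lc (self_bracket (swap_gen b x) (a - 2*r*c + r^2*d) (c - r*d) d)"
  by (rule lc_eqI[where K="keys_deg3 (swap_gen b x)"])
     (cases x; cases b; simp add: r tmap2_list_def self_bracket_def shift_gens_def lc_tensor_def lc1_mult_def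
       lc_keys_def keys_deg3_def; simp add: algebra_simps power2_eq_square)+

definition keys_deg2 :: "(gen list \<times> gen list) list" where
  "keys_deg2 = [([], []), ([T], []), ([S], []), ([], [T]), ([], [S]), ([T,T], []), ([T,S], []), ([S,T], []),
     ([S,S], []), ([T], [T]), ([T], [S]), ([S], [T]), ([S], [S]), ([], [T,T]), ([], [T,S]), ([], [S,T]), ([], [S,S])]"

definition has_normal_form :: "('k::field nc \<Rightarrow> 'k nc \<Rightarrow> 'k nc2) \<Rightarrow> bool" where
  "has_normal_form br \<longleftrightarrow> (\<exists>br'. is_double_bracket br' \<and> isomorphic_dqp br br' \<and>
     normal_form (br' tgen tgen) (br' sgen sgen) (br' tgen sgen))"

definition ts_reduced :: "'k \<Rightarrow> 'k \<Rightarrow> 'k \<Rightarrow> 'k \<Rightarrow> 'k \<Rightarrow> 'k \<Rightarrow> 'k \<Rightarrow> ('k \<times> gen list \<times> gen list) list" where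
  "ts_reduced g0 g1 a1 a2 a2' a3 c =
     [(g0, [T], [T]), (g1, [S], [S]), (a1, [S,T], []), (a2, [T], [S]), (a2', [S], [T]), (a3, [], [T,S]), (c, [], [])]"

lemma lc_self_bracket_quad: "lc (self_bracket x 0 c 0) = lc [(c, [x,x], []), (-c, [], [x,x])]"
  by (rule lc_eqI[where K="lc_keys (self_bracket x 0 c 0)"]) (simp_all add: self_bracket_def lc_keys_def)

lemma lc_self_bracket_cub:
  "lc (self_bracket x (-1/(4*c)) 0 c) =
   lc [(-1/(4*c), [x], []), (1/(4*c), [], [x]), (c, [x,x], [x]), (-c, [x], [x,x])]"
  by (rule lc_eqI[where K="lc_keys (self_bracket x 0 0 c)"]) (simp_all add: self_bracket_def lc_keys_def)

lemma lc_ts_reduced_TS_A: "lc (ts_reduced 0 0 c (-c) c (-c) 0) = TS_A c"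
  unfolding TS_A_def
  by (rule lc_eqI[where K="lc_keys (ts_reduced 0 0 c (-c) c (-c) 0)"]) (simp_all add: ts_reduced_def lc_keys_def)

lemma lc_ts_reduced_TS_B: "lc (ts_reduced 0 0 c (-c) (-c) c 0) = TS_B c"
  unfolding TS_B_def
  by (rule lc_eqI[where K="lc_keys (ts_reduced 0 0 c (-c) c (-c) 0)"]) (simp_all add: ts_reduced_def lc_keys_def)

lemmas normal_form_simps = normal_form_def lc_self_bracket_quad lc_self_bracket_cub
  TT_quad_def SS_quad_def TT_cub_def SS_cub_def lc_ts_reduced_TS_A lc_ts_reduced_TS_B

lemma normal_form_1I:
  assumes "pm_half \<mu>" "\<alpha>^2 = 1/4 + g0 * g1"
  shows "normal_form (lc (self_bracket T 0 \<mu> 0)) (lc (self_bracket S 0 \<mu> 0)) (lc (ts_reduced g0 g1 \<mu> \<alpha> \<alpha> (-\<mu>) 0))"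
proof -
  have "lc (ts_reduced g0 g1 \<mu> \<alpha> \<alpha> (-\<mu>) 0) =
        lc [(g0, [T], [T]), (g1, [S], [S]), (\<mu>, [S,T], []), (-\<mu>, [], [T,S]), (\<alpha>, [T], [S]), (\<alpha>, [S], [T])]"
    by (rule lc_eqI[where K="lc_keys (ts_reduced g0 g1 \<mu> \<alpha> \<alpha> (-\<mu>) 0)"]) (simp_all add: ts_reduced_def lc_keys_def)
  thus ?thesis using assms unfolding normal_form_simps by blast
qed

lemma normal_form_2I:
  assumes "pm_half \<alpha>" "pm_half \<mu>"
  shows "normal_form (lc (self_bracket T 0 \<mu> 0)) (lc (self_bracket S 0 (-\<mu>) 0)) (lc (ts_reduced 0 0 \<alpha> (-\<mu>) \<mu> \<alpha> c))"
proof -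
  have "lc (ts_reduced 0 0 \<alpha> (-\<mu>) \<mu> \<alpha> c) =
        lc [(\<alpha>, [S,T], []), (\<alpha>, [], [T,S]), (\<mu>, [S], [T]), (-\<mu>, [T], [S]), (c, [], [])]"
    by (rule lc_eqI[where K="lc_keys (ts_reduced 0 0 \<alpha> (-\<mu>) \<mu> \<alpha> c)"]) (simp_all add: ts_reduced_def lc_keys_def)
  thus ?thesis using assms unfolding normal_form_simps by blast
qed

lemma normal_form_3I:
  "pm_half m \<Longrightarrow> pm_half \<mu> \<Longrightarrow>
   normal_form (lc (self_bracket T 0 \<mu> 0)) (lc (self_bracket S 0 m 0)) (lc (ts_reduced 0 0 \<mu> (-\<mu>) \<mu> (-\<mu>) 0))"
  unfolding normal_form_simps by blast

lemma normal_form_4I: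
  "pm_half \<alpha> \<Longrightarrow> pm_half m \<Longrightarrow> pm_half \<mu> \<Longrightarrow>
   normal_form (lc (self_bracket T 0 \<mu> 0)) (lc (self_bracket S 0 m 0)) (lc (ts_reduced 0 0 \<alpha> (-\<alpha>) (-\<alpha>) \<alpha> 0))"
  unfolding normal_form_simps by blast

lemma normal_form_5I:
  "n \<noteq> 0 \<Longrightarrow> pm_half \<alpha> \<Longrightarrow> pm_half \<mu> \<Longrightarrow>
   normal_form (lc (self_bracket T 0 \<mu> 0)) (lc (self_bracket S (-1/(4*n)) 0 n)) (lc (ts_reduced 0 0 \<alpha> (-\<alpha>) (-\<alpha>) \<alpha> 0))"
  unfolding normal_form_simps by blast

lemma normal_form_6I:
  "n \<noteq> 0 \<Longrightarrow> pm_half \<mu> \<Longrightarrow>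
   normal_form (lc (self_bracket T 0 \<mu> 0)) (lc (self_bracket S (-1/(4*n)) 0 n)) (lc (ts_reduced 0 0 \<mu> (-\<mu>) \<mu> (-\<mu>) 0))"
  unfolding normal_form_simps by blast

lemma normal_form_7I:
  "n \<noteq> 0 \<Longrightarrow> \<nu> \<noteq> 0 \<Longrightarrow> pm_half \<alpha> \<Longrightarrow>
   normal_form (lc (self_bracket T (-1/(4*\<nu>)) 0 \<nu>)) (lc (self_bracket S (-1/(4*n)) 0 n))
     (lc (ts_reduced 0 0 \<alpha> (-\<alpha>) (-\<alpha>) \<alpha> 0))"
  unfolding normal_form_simps by blast

section \<open>Coefficient equations of a quasi-Poisson bracket\<close>


locale qp_bracket =
  fixes br :: "'k::field_char_0 nc \<Rightarrow> 'k nc \<Rightarrow> 'k nc2"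
    and lam \<mu> \<nu> l m n :: 'k
    and \<alpha>0 \<alpha>0' \<beta>0 \<beta>0' \<gamma>0 \<gamma>1 \<alpha>1 \<alpha>1' \<alpha>2 \<alpha>2' \<alpha>3 \<alpha>3' \<beta>1 \<beta>1' \<beta>2 \<beta>2' \<gamma> :: 'k
  assumes db: "is_double_bracket br"
    and tt: "br tgen tgen = lc [(lam, [T], []), (-lam, [], [T]),
                                (\<mu>, [T,T], []), (-\<mu>, [], [T,T]),
                                (\<nu>, [T,T], [T]), (-\<nu>, [T], [T,T])]"
    and ss: "br sgen sgen = lc [(l, [S], []), (-l, [], [S]),
                                (m, [S,S], []), (-m, [], [S,S]),
                                (n, [S,S], [S]), (-n, [S], [S,S])]"
    and cond_t: "4 * (\<mu>^2 - lam * \<nu>) = 1"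
    and cond_s: "4 * (m^2 - l * n) = 1"
    and ts: "br tgen sgen = lc [(\<alpha>0, [T,T], []), (\<alpha>0', [], [T,T]),
                                (\<beta>0, [S,S], []), (\<beta>0', [], [S,S]),
                                (\<gamma>0, [T], [T]), (\<gamma>1, [S], [S]),
                                (\<alpha>1, [T,S], []), (\<alpha>1', [S,T], []),
                                (\<alpha>2, [T], [S]), (\<alpha>2', [S], [T]),
                                (\<alpha>3, [], [T,S]), (\<alpha>3', [], [S,T]),
                                (\<beta>1, [T], []), (\<beta>1', [], [T]),
                                (\<beta>2, [S], []), (\<beta>2', [], [S]),
                                (\<gamma>, [], [])]"
    and qp: "quasi_poisson br"
begin

definition "ts_list = [(\<alpha>0, [T,T], []), (\<alpha>0', [], [T,T]), (\<beta>0, [S,S], []), (\<beta>0', [], [S,S]),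
                       (\<gamma>0, [T], [T]), (\<gamma>1, [S], [S]), (\<alpha>1, [T,S], []), (\<alpha>1', [S,T], []),
                       (\<alpha>2, [T], [S]), (\<alpha>2', [S], [T]), (\<alpha>3, [], [T,S]), (\<alpha>3', [], [S,T]),
                       (\<beta>1, [T], []), (\<beta>1', [], [T]), (\<beta>2, [S], []), (\<beta>2', [], [S]), (\<gamma>, [], [])]"

fun gen_bracket_list :: "gen \<Rightarrow> gen \<Rightarrow> ('k \<times> gen list \<times> gen list) list" where
  "gen_bracket_list T T = self_bracket T lam \<mu> \<nu>"
| "gen_bracket_list S S = self_bracket S l m n"
| "gen_bracket_list T S = ts_list"
| "gen_bracket_list S T = lc_neg_swap ts_list"

lemma double_bracket_gens: "br (mono [x]) (mono [y]) = lc (gen_bracket_list x y)"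
proof (cases x; cases y)
  assume "x = S" "y = T"
  have "br sgen tgen = ncneg (swap2 (br tgen sgen))"
    using db unfolding is_double_bracket_def ncgen_def by (meson mono_ncA)
  thus ?thesis using \<open>x = S\<close> \<open>y = T\<close> by (simp add: ts[unfolded ncgen_def] ncgen_def ncneg_swap2_lc ts_list_def)
qed (use tt[unfolded ncgen_def] ss[unfolded ncgen_def] ts[unfolded ncgen_def] in
     \<open>auto simp: self_bracket_def ts_list_def\<close>)

lemmas qp_coeff = quasi_poisson_coeff[OF db double_bracket_gens qp]

lemmas qp_coeff_simps =
  self_bracket_def ts_list_def lc_neg_swap_def qp_rhs_def tens3_def ncmul_mono ncone_mono mono_apply

lemma ts_coeffs_zero: "\<alpha>0 = 0" "\<alpha>0' = 0" "\<alpha>1 = 0" "\<alpha>3' = 0" "\<beta>0 = 0" "\<beta>0' = 0"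
proof -
  show "\<alpha>0 = 0"
    using qp_coeff[where a=S and b=S and c=T and x="[]" and y="[]" and z="[T,T,T]"]
    by (simp add: qp_coeff_simps)
  show "\<alpha>0' = 0"
    using qp_coeff[where a=S and b=S and c=T and x="[T,T,T]" and y="[]" and z="[]"]
    by (simp add: qp_coeff_simps)
  show "\<alpha>1 = 0"
    using qp_coeff[where a=S and b=T and c=T and x="[]" and y="[T,T,S]" and z="[]"]
    by (simp add: qp_coeff_simps)
  show "\<alpha>3' = 0"
    using qp_coeff[where a=S and b=S and c=T and x="[S,S,T]" and y="[]" and z="[]"]
    by (simp add: qp_coeff_simps)
  show "\<beta>0 = 0"
    using qp_coeff[where a=S and b=T and c=T and x="[]" and y="[S,S,S]" and z="[]"]
    by (simp add: qp_coeff_simps)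
  show "\<beta>0' = 0"
    using qp_coeff[where a=S and b=T and c=T and x="[S,S,S]" and y="[]" and z="[]"]
    by (simp add: qp_coeff_simps)
qed

text \<open>\<open>qp_abc_x_y_z\<close> is read off from the coefficient of \<open>x \<otimes> y \<otimes> z\<close> in the quasi-Poisson
  identity for \<open>{{a, b, c}}\<close>, writing \<open>1\<close> for the empty word.\<close>

lemma qp_sst_s_ss_s: "\<gamma>1 * n = 0"
  using qp_coeff[where a=S and b=S and c=T and x="[S]" and y="[S,S]" and z="[S]"]
  by (simp add: qp_coeff_simps del: mult_eq_0_iff; use ts_coeffs_zero in algebra)

lemma qp_sst_t_s_st: "\<gamma>0 * n = 0"
  using qp_coeff[where a=S and b=S and c=T and x="[T]" and y="[S]" and z="[S,T]"]
  by (simp add: qp_coeff_simps del: mult_eq_0_iff; use ts_coeffs_zero in algebra)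

lemma qp_stt_s_s_tt: "\<gamma>1 * \<nu> = 0"
  using qp_coeff[where a=S and b=T and c=T and x="[S]" and y="[S]" and z="[T,T]"]
  by (simp add: qp_coeff_simps del: mult_eq_0_iff; use ts_coeffs_zero in algebra)

lemma qp_stt_t_t_tt: "\<gamma>0 * \<nu> = 0"
  using qp_coeff[where a=S and b=T and c=T and x="[T]" and y="[T]" and z="[T,T]"]
  by (simp add: qp_coeff_simps del: mult_eq_0_iff; use ts_coeffs_zero in algebra)

lemma qp_sst_s_s_st: "(\<alpha>1' + \<alpha>2) * n = 0"
  using qp_coeff[where a=S and b=S and c=T and x="[S]" and y="[S]" and z="[S,T]"]
  by (simp add: qp_coeff_simps del: mult_eq_0_iff; use ts_coeffs_zero in algebra)

lemma qp_sst_ts_s_s: "(\<alpha>2' + \<alpha>3) * n = 0"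
  using qp_coeff[where a=S and b=S and c=T and x="[T,S]" and y="[S]" and z="[S]"]
  by (simp add: qp_coeff_simps del: mult_eq_0_iff; use ts_coeffs_zero in algebra)

lemma qp_sst_1_1_st: "(m - \<alpha>1') * \<beta>1 = 0"
  using qp_coeff[where a=S and b=S and c=T and x="[]" and y="[]" and z="[S,T]"]
  by (simp add: qp_coeff_simps del: mult_eq_0_iff; use ts_coeffs_zero in algebra)

lemma qp_sst_1_ss_s: "(m - \<alpha>1') * \<gamma>1 = 0"
  using qp_coeff[where a=S and b=S and c=T and x="[]" and y="[S,S]" and z="[S]"]
  by (simp add: qp_coeff_simps del: mult_eq_0_iff; use ts_coeffs_zero in algebra)

lemma qp_sst_t_1_st: "(m - \<alpha>1') * \<gamma>0 = 0"
  using qp_coeff[where a=S and b=S and c=T and x="[T]" and y="[]" and z="[S,T]"]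
  by (simp add: qp_coeff_simps del: mult_eq_0_iff; use ts_coeffs_zero in algebra)

lemma qp_sst_ts_1_1: "(m + \<alpha>3) * \<beta>1' = 0"
  using qp_coeff[where a=S and b=S and c=T and x="[T,S]" and y="[]" and z="[]"]
  by (simp add: qp_coeff_simps del: mult_eq_0_iff; use ts_coeffs_zero in algebra)

lemma qp_sst_t_s_t: "(\<alpha>2' - \<alpha>2) * \<gamma>0 = 0"
  using qp_coeff[where a=S and b=S and c=T and x="[T]" and y="[S]" and z="[T]"]
  by (simp add: qp_coeff_simps del: mult_eq_0_iff; use ts_coeffs_zero in algebra)

lemma qp_stt_1_st_1: "(\<alpha>1' - \<mu>) * \<beta>2 = 0"
  using qp_coeff[where a=S and b=T and c=T and x="[]" and y="[S,T]" and z="[]"]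
  by (simp add: qp_coeff_simps del: mult_eq_0_iff; use ts_coeffs_zero in algebra)

lemma qp_stt_1_t_tt: "(\<alpha>1' - \<mu>) * \<gamma>0 = 0"
  using qp_coeff[where a=S and b=T and c=T and x="[]" and y="[T]" and z="[T,T]"]
  by (simp add: qp_coeff_simps del: mult_eq_0_iff; use ts_coeffs_zero in algebra)

lemma qp_stt_s_s_t: "(\<alpha>2' - \<alpha>2) * \<gamma>1 = 0"
  using qp_coeff[where a=S and b=T and c=T and x="[S]" and y="[S]" and z="[T]"]
  by (simp add: qp_coeff_simps del: mult_eq_0_iff; use ts_coeffs_zero in algebra)

lemma qp_stt_s_st_1: "(\<alpha>1' - \<mu>) * \<gamma>1 = 0"
  using qp_coeff[where a=S and b=T and c=T and x="[S]" and y="[S,T]" and z="[]"]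
  by (simp add: qp_coeff_simps del: mult_eq_0_iff; use ts_coeffs_zero in algebra)

lemma qp_stt_t_1_tt: "(\<alpha>3 + \<mu>) * \<gamma>0 = 0"
  using qp_coeff[where a=S and b=T and c=T and x="[T]" and y="[]" and z="[T,T]"]
  by (simp add: qp_coeff_simps del: mult_eq_0_iff; use ts_coeffs_zero in algebra)

lemma qp_stt_ts_s_1: "(\<alpha>3 + \<mu>) * \<gamma>1 = 0"
  using qp_coeff[where a=S and b=T and c=T and x="[T,S]" and y="[S]" and z="[]"]
  by (simp add: qp_coeff_simps del: mult_eq_0_iff; use ts_coeffs_zero in algebra)

lemma qp_stt_ts_t_t: "(\<alpha>2 + \<alpha>3) * \<nu> = 0"
  using qp_coeff[where a=S and b=T and c=T and x="[T,S]" and y="[T]" and z="[T]"]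
  by (simp add: qp_coeff_simps del: mult_eq_0_iff; use ts_coeffs_zero in algebra)

lemma qp_stt_t_st_t: "(\<alpha>1' + \<alpha>2') * \<nu> = 0"
  using qp_coeff[where a=S and b=T and c=T and x="[T]" and y="[S,T]" and z="[T]"]
  by (simp add: qp_coeff_simps del: mult_eq_0_iff; use ts_coeffs_zero in algebra)

lemma qp_stt_ts_1_1: "(\<alpha>3 + \<mu>) * \<beta>2' = 0"
  using qp_coeff[where a=S and b=T and c=T and x="[T,S]" and y="[]" and z="[]"]
  by (simp add: qp_coeff_simps del: mult_eq_0_iff; use ts_coeffs_zero in algebra)

lemma qp_sst_1_s_st: "\<alpha>1'^2 = 1/4 + \<beta>1 * n"
  using qp_coeff[where a=S and b=S and c=T and x="[]" and y="[S]" and z="[S,T]"]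
  by (simp add: qp_coeff_simps del: mult_eq_0_iff; use ts_coeffs_zero in algebra)

lemma qp_sst_ts_s_1: "\<alpha>3^2 = 1/4 - \<beta>1' * n"
  using qp_coeff[where a=S and b=S and c=T and x="[T,S]" and y="[S]" and z="[]"]
  by (simp add: qp_coeff_simps del: mult_eq_0_iff; use ts_coeffs_zero in algebra)

lemma qp_sst_1_1_s: "(\<alpha>2' + m) * \<gamma> = \<beta>1 * \<beta>2"
  using qp_coeff[where a=S and b=S and c=T and x="[]" and y="[]" and z="[S]"]
  by (simp add: qp_coeff_simps del: mult_eq_0_iff; use ts_coeffs_zero in algebra)

lemma qp_sst_s_1_1: "(m - \<alpha>2) * \<gamma> = - \<beta>1' * \<beta>2'"
  using qp_coeff[where a=S and b=S and c=T and x="[S]" and y="[]" and z="[]"]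
  by (simp add: qp_coeff_simps del: mult_eq_0_iff; use ts_coeffs_zero in algebra)

lemma qp_sst_s_1_t: "(m - \<alpha>2) * \<beta>1 + \<gamma>0 * \<beta>2' = 0"
  using qp_coeff[where a=S and b=S and c=T and x="[S]" and y="[]" and z="[T]"]
  by (simp add: qp_coeff_simps del: mult_eq_0_iff; use ts_coeffs_zero in algebra)

lemma qp_sst_t_1_s: "(m + \<alpha>2') * \<beta>1' = \<gamma>0 * \<beta>2"
  using qp_coeff[where a=S and b=S and c=T and x="[T]" and y="[]" and z="[S]"]
  by (simp add: qp_coeff_simps del: mult_eq_0_iff; use ts_coeffs_zero in algebra)

lemma qp_stt_t_1_1: "(\<alpha>2' - \<mu>) * \<gamma> = \<beta>1' * \<beta>2'"
  using qp_coeff[where a=S and b=T and c=T and x="[T]" and y="[]" and z="[]"]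
  by (simp add: qp_coeff_simps del: mult_eq_0_iff; use ts_coeffs_zero in algebra)

lemma qp_stt_s_t_1: "(\<alpha>2 + \<mu>) * \<beta>2' = \<gamma>1 * \<beta>1"
  using qp_coeff[where a=S and b=T and c=T and x="[S]" and y="[T]" and z="[]"]
  by (simp add: qp_coeff_simps del: mult_eq_0_iff; use ts_coeffs_zero in algebra)

lemma qp_stt_t_s_1: "(\<alpha>2' - \<mu>) * \<beta>2 = \<gamma>1 * \<beta>1'"
  using qp_coeff[where a=S and b=T and c=T and x="[T]" and y="[S]" and z="[]"]
  by (simp add: qp_coeff_simps del: mult_eq_0_iff; use ts_coeffs_zero in algebra)

lemma qp_sst_s_s_t: "\<alpha>2^2 = 1/4 + \<beta>1 * n + \<gamma>0 * \<gamma>1"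
  using qp_coeff[where a=S and b=S and c=T and x="[S]" and y="[S]" and z="[T]"]
  by (simp add: qp_coeff_simps del: mult_eq_0_iff; use ts_coeffs_zero in algebra)

lemma qp_sst_ts_1_s: "(\<alpha>2' + m) * (\<alpha>3 + m) = m^2 - 1/4"
  using qp_coeff[where a=S and b=S and c=T and x="[T,S]" and y="[]" and z="[S]"]
  by (simp add: qp_coeff_simps del: mult_eq_0_iff; use ts_coeffs_zero in algebra)

lemma qp_sst_s_1_st: "(\<alpha>1' - m) * (\<alpha>2 - m) = m^2 - 1/4"
  using qp_coeff[where a=S and b=S and c=T and x="[S]" and y="[]" and z="[S,T]"]
  by (simp add: qp_coeff_simps del: mult_eq_0_iff; use ts_coeffs_zero in algebra)

lemma qp_sst_t_s_s: "\<alpha>2'^2 = 1/4 - \<beta>1' * n + \<gamma>0 * \<gamma>1"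
  using qp_coeff[where a=S and b=S and c=T and x="[T]" and y="[S]" and z="[S]"]
  by (simp add: qp_coeff_simps del: mult_eq_0_iff; use ts_coeffs_zero in algebra)

lemma qp_stt_ts_t_1: "(\<alpha>2 + \<mu>) * (\<alpha>3 + \<mu>) = \<mu>^2 - 1/4"
  using qp_coeff[where a=S and b=T and c=T and x="[T,S]" and y="[T]" and z="[]"]
  by (simp add: qp_coeff_simps del: mult_eq_0_iff; use ts_coeffs_zero in algebra)

lemma qp_stt_t_st_1: "(\<alpha>1' - \<mu>) * (\<alpha>2' - \<mu>) = \<mu>^2 - 1/4"
  using qp_coeff[where a=S and b=T and c=T and x="[T]" and y="[S,T]" and z="[]"]
  by (simp add: qp_coeff_simps del: mult_eq_0_iff; use ts_coeffs_zero in algebra)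

lemma qp_sst_t_ss_1: "(\<alpha>2' + m) * (\<alpha>3 + m) = m^2 - 1/4 + \<beta>1' * n"
  using qp_coeff[where a=S and b=S and c=T and x="[T]" and y="[S,S]" and z="[]"]
  by (simp add: qp_coeff_simps del: mult_eq_0_iff; use ts_coeffs_zero in algebra)

lemma qp_sst_1_ss_t: "(\<alpha>1' - m) * (\<alpha>2 - m) = m^2 - 1/4 - \<beta>1 * n"
  using qp_coeff[where a=S and b=S and c=T and x="[]" and y="[S,S]" and z="[T]"]
  by (simp add: qp_coeff_simps del: mult_eq_0_iff; use ts_coeffs_zero in algebra)

lemma qp_sst_1_s_s: "(\<alpha>2' - \<alpha>1') * \<beta>2 + \<gamma> * n + \<gamma>1 * (l - \<beta>1) = 0"
  using qp_coeff[where a=S and b=S and c=T and x="[]" and y="[S]" and z="[S]"]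
  by (simp add: qp_coeff_simps del: mult_eq_0_iff; use ts_coeffs_zero in algebra)

lemma qp_sst_s_s_1: "(\<alpha>3 - \<alpha>2) * \<beta>2' + \<gamma> * n + \<gamma>1 * (l + \<beta>1') = 0"
  using qp_coeff[where a=S and b=S and c=T and x="[S]" and y="[S]" and z="[]"]
  by (simp add: qp_coeff_simps del: mult_eq_0_iff; use ts_coeffs_zero in algebra)

lemma qp_stt_s_1_tt: "(\<alpha>2 + \<mu>) * (\<alpha>3 + \<mu>) = \<mu>^2 - 1/4 + \<beta>2' * \<nu>"
  using qp_coeff[where a=S and b=T and c=T and x="[S]" and y="[]" and z="[T,T]"]
  by (simp add: qp_coeff_simps del: mult_eq_0_iff; use ts_coeffs_zero in algebra)

lemma qp_sst_1_s_t: "(\<alpha>1' + \<alpha>2) * (l - \<beta>1) + \<gamma>0 * \<beta>2 = 0"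
  using qp_coeff[where a=S and b=S and c=T and x="[]" and y="[S]" and z="[T]"]
  by (simp add: qp_coeff_simps del: mult_eq_0_iff; use ts_coeffs_zero in algebra)

lemma qp_stt_1_s_tt: "(\<alpha>1' - \<mu>) * (\<alpha>2' - \<mu>) = \<mu>^2 - 1/4 - \<beta>2 * \<nu>"
  using qp_coeff[where a=S and b=T and c=T and x="[]" and y="[S]" and z="[T,T]"]
  by (simp add: qp_coeff_simps del: mult_eq_0_iff; use ts_coeffs_zero in algebra)

lemma qp_sst_t_s_1: "(\<alpha>2' + \<alpha>3) * (l + \<beta>1') = \<gamma>0 * \<beta>2'"
  using qp_coeff[where a=S and b=S and c=T and x="[T]" and y="[S]" and z="[]"]
  by (simp add: qp_coeff_simps del: mult_eq_0_iff; use ts_coeffs_zero in algebra)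

lemma qp_stt_1_t_t: "(\<alpha>1' - \<alpha>2) * \<beta>1 + \<gamma>0 * (\<beta>2 - lam) = \<gamma> * \<nu>"
  using qp_coeff[where a=S and b=T and c=T and x="[]" and y="[T]" and z="[T]"]
  by (simp add: qp_coeff_simps del: mult_eq_0_iff; use ts_coeffs_zero in algebra)

lemma qp_stt_t_1_t: "(\<alpha>2' - \<alpha>3) * \<beta>1' - \<gamma>0 * (\<beta>2' + lam) = \<gamma> * \<nu>"
  using qp_coeff[where a=S and b=T and c=T and x="[T]" and y="[]" and z="[T]"]
  by (simp add: qp_coeff_simps del: mult_eq_0_iff; use ts_coeffs_zero in algebra)

lemma qp_stt_1_s_t: "(\<alpha>1' + \<alpha>2') * (\<beta>2 - lam) = \<gamma>1 * \<beta>1"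
  using qp_coeff[where a=S and b=T and c=T and x="[]" and y="[S]" and z="[T]"]
  by (simp add: qp_coeff_simps del: mult_eq_0_iff; use ts_coeffs_zero in algebra)

lemma qp_stt_s_1_t: "(\<alpha>2 + \<alpha>3) * (\<beta>2' + lam) = \<gamma>1 * \<beta>1'"
  using qp_coeff[where a=S and b=T and c=T and x="[S]" and y="[]" and z="[T]"]
  by (simp add: qp_coeff_simps del: mult_eq_0_iff; use ts_coeffs_zero in algebra)

lemma qp_sst_1_s_1: "(\<alpha>3 - \<alpha>1') * \<gamma> + \<beta>1' * \<beta>2 - \<beta>1 * \<beta>2' + (\<beta>2 + \<beta>2') * l = 0"
  using qp_coeff[where a=S and b=S and c=T and x="[]" and y="[S]" and z="[]"]
  by (simp add: qp_coeff_simps del: mult_eq_0_iff; use ts_coeffs_zero in algebra)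

lemma qp_stt_1_1_t: "(\<alpha>1' - \<alpha>3) * \<gamma> + \<beta>1' * \<beta>2 - \<beta>1 * \<beta>2' = (\<beta>1 + \<beta>1') * lam"
  using qp_coeff[where a=S and b=T and c=T and x="[]" and y="[]" and z="[T]"]
  by (simp add: qp_coeff_simps del: mult_eq_0_iff; use ts_coeffs_zero in algebra)

definition "shift_t = (if \<nu> = 0 then 2*\<mu>*lam else \<mu>/\<nu>)"
definition "shift_s = (if n = 0 then 2*m*l else m/n)"

lemma shift_t_coeffs:
  "lam - 2*shift_t*\<mu> + shift_t^2*\<nu> = (if \<nu> = 0 then 0 else -1/(4*\<nu>))"
  "\<mu> - shift_t*\<nu> = (if \<nu> = 0 then \<mu> else 0)"
  by (use cond_t in \<open>auto simp: shift_t_def field_simps power2_eq_square; algebra\<close>) (simp add: shift_t_def)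

lemma shift_s_coeffs:
  "l - 2*shift_s*m + shift_s^2*n = (if n = 0 then 0 else -1/(4*n))"
  "m - shift_s*n = (if n = 0 then m else 0)"
  by (use cond_s in \<open>auto simp: shift_s_def field_simps power2_eq_square; algebra\<close>) (simp add: shift_s_def)

lemma has_normal_form_transport:
  assumes "normal_form (lc (tmap2_list (shift_gens b p q) (gen_bracket_list (swap_gen b T) (swap_gen b T))))
                       (lc (tmap2_list (shift_gens b p q) (gen_bracket_list (swap_gen b S) (swap_gen b S))))
                       (lc (tmap2_list (shift_gens b p q) (gen_bracket_list (swap_gen b T) (swap_gen b S))))"
  shows "has_normal_form br"
  unfolding has_normal_form_def
proof (intro exI conjI)
  interpret inverse_substs "\<lambda>x. lc1 (shift_gens b p q x)" "\<lambda>x. lc1 (unshift_gens b p q x)"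
    by (rule inverse_substs_shift_gens)
  let ?br = "transport (\<lambda>x. lc1 (shift_gens b p q x)) (\<lambda>x. lc1 (unshift_gens b p q x)) br"
  show "is_double_bracket ?br" by (rule is_double_bracket_transport[OF db])
  show "isomorphic_dqp br ?br" by (rule isomorphic_dqp_transport)
  have "?br (mono [x]) (mono [y]) = lc (tmap2_list (shift_gens b p q) (gen_bracket_list (swap_gen b x) (swap_gen b y)))"
    for x y by (rule transport_shift_gens[OF db double_bracket_gens])
  thus "normal_form (?br tgen tgen) (?br sgen sgen) (?br tgen sgen)"
    using assms by (simp add: ncgen_def)
qed

text \<open>The image of \<open>{{t, s}}\<close> under \<open>t \<mapsto> t - p\<close>, \<open>s \<mapsto> s - q\<close> has no terms of degree one
  and constant term \<open>c\<close> (see \<open>lc_shift_ts_list\<close>).\<close>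

definition shift_kills_linear :: "'k \<Rightarrow> 'k \<Rightarrow> 'k \<Rightarrow> bool" where
  "shift_kills_linear p q c \<longleftrightarrow>
     \<beta>1 = \<gamma>0*p + (\<alpha>1' + \<alpha>2)*q \<and> \<beta>1' = \<gamma>0*p + (\<alpha>2' + \<alpha>3)*q \<and>
     \<beta>2 = \<gamma>1*q + (\<alpha>1' + \<alpha>2')*p \<and> \<beta>2' = \<gamma>1*q + (\<alpha>2 + \<alpha>3)*p \<and>
     \<gamma> = c + \<gamma>0*p^2 + \<gamma>1*q^2 + (\<alpha>1' + \<alpha>2 + \<alpha>2' + \<alpha>3)*p*q"

lemma lc_shift_ts_list:
  assumes "shift_kills_linear p q c"
  shows "lc (tmap2_list (shift_gens False p q) ts_list) = lc (ts_reduced \<gamma>0 \<gamma>1 \<alpha>1' \<alpha>2 \<alpha>2' \<alpha>3 c)"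
  unfolding ts_list_def using assms unfolding shift_kills_linear_def
  by (intro lc_eqI[where K=keys_deg2]; simp add: ts_coeffs_zero tmap2_list_def shift_gens_def lc_tensor_def
      lc1_mult_def lc_keys_def keys_deg2_def ts_reduced_def; simp add: algebra_simps power2_eq_square)

lemma lc_shift_swap_ts_list:
  assumes "shift_kills_linear p q c"
  shows "lc (tmap2_list (shift_gens True p q) (lc_neg_swap ts_list)) =
         lc (ts_reduced (-\<gamma>1) (-\<gamma>0) (-\<alpha>3) (-\<alpha>2) (-\<alpha>2') (-\<alpha>1') (-c))"
  unfolding ts_list_def using assms unfolding shift_kills_linear_def
  by (intro lc_eqI[where K=keys_deg2]; simp add: ts_coeffs_zero tmap2_list_def lc_neg_swap_def shift_gens_def
      lc_tensor_def lc1_mult_def lc_keys_def keys_deg2_def ts_reduced_def; simp add: algebra_simps power2_eq_square)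

lemma has_normal_form_reduce:
  assumes "shift_kills_linear shift_t shift_s c"
    and "normal_form
           (lc (self_bracket T (if \<nu> = 0 then 0 else -1/(4*\<nu>)) (if \<nu> = 0 then \<mu> else 0) \<nu>))
           (lc (self_bracket S (if n = 0 then 0 else -1/(4*n)) (if n = 0 then m else 0) n))
           (lc (ts_reduced \<gamma>0 \<gamma>1 \<alpha>1' \<alpha>2 \<alpha>2' \<alpha>3 c))"
  shows "has_normal_form br"
  by (rule has_normal_form_transport[where b=False and p=shift_t and q=shift_s])
     (use assms in \<open>simp add: lc_shift_self_bracket shift_t_coeffs shift_s_coeffs lc_shift_ts_list\<close>)

lemma has_normal_form_reduce_swap:
  assumes "shift_kills_linear shift_t shift_s c"
    and "normal_form
           (lc (self_bracket T (if n = 0 then 0 else -1/(4*n)) (if n = 0 then m else 0) n))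
           (lc (self_bracket S (if \<nu> = 0 then 0 else -1/(4*\<nu>)) (if \<nu> = 0 then \<mu> else 0) \<nu>))
           (lc (ts_reduced (-\<gamma>1) (-\<gamma>0) (-\<alpha>3) (-\<alpha>2) (-\<alpha>2') (-\<alpha>1') (-c)))"
  shows "has_normal_form br"
  by (rule has_normal_form_transport[where b=True and p=shift_t and q=shift_s])
     (use assms in \<open>simp add: lc_shift_self_bracket shift_t_coeffs shift_s_coeffs lc_shift_swap_ts_list\<close>)

end

section \<open>Classification\<close>

lemma pm_half_iff_sq: "pm_half (x::'k::field_char_0) \<longleftrightarrow> x^2 = 1/4"
proof -
  have "x^2 = 1/4 \<longleftrightarrow> x^2 = (1/2)^2" by (simp add: power2_eq_square)
  thus ?thesis by (simp add: power2_eq_iff pm_half_def)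
qed

lemma pm_half_same_or_opp: "pm_half x \<Longrightarrow> pm_half y \<Longrightarrow> x = y \<or> x = -y"
  unfolding pm_half_def by (elim disjE; hypsubst_thin; simp)

lemma pm_half_sign_patterns:
  fixes \<mu> m a b c d :: "'k::field_char_0"
  assumes "pm_half \<mu>" "pm_half m" "pm_half a" "pm_half b" "pm_half c" "pm_half d"
    "(c + m) * (d + m) = 0" "(a - m) * (b - m) = 0" "(b + \<mu>) * (d + \<mu>) = 0" "(a - \<mu>) * (c - \<mu>) = 0"
  shows "(m = \<mu> \<and> a = \<mu> \<and> d = -\<mu> \<and> b = c) \<or> (m = -\<mu> \<and> a = d \<and> b = -\<mu> \<and> c = \<mu>) \<or>
    (a = \<mu> \<and> b = -\<mu> \<and> c = \<mu> \<and> d = -\<mu>) \<or> (a = m \<and> b = m \<and> c = -m \<and> d = -m) \<or>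
    (a = d \<and> b = -a \<and> c = -a)"
  using assms unfolding pm_half_def by (elim disjE; hypsubst_thin+; simp)

context qp_bracket
begin

lemma beta_vanish: "\<beta>1 * n = 0" "\<beta>1' * n = 0" "\<beta>2 * \<nu> = 0" "\<beta>2' * \<nu> = 0"
  using qp_sst_s_1_st qp_sst_1_ss_t qp_sst_ts_1_s qp_sst_t_ss_1
    qp_stt_t_st_1 qp_stt_1_s_tt qp_stt_ts_t_1 qp_stt_s_1_tt by algebra+

lemma alpha_squares:
  "\<alpha>1'^2 = 1/4" "\<alpha>3^2 = 1/4" "\<alpha>2^2 = 1/4 + \<gamma>0 * \<gamma>1" "\<alpha>2'^2 = 1/4 + \<gamma>0 * \<gamma>1"
  using qp_sst_1_s_st qp_sst_ts_s_1 qp_sst_s_s_t qp_sst_t_s_s beta_vanish by simp_all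

lemma mu_sq: "\<nu> = 0 \<Longrightarrow> \<mu>^2 = 1/4"
  using cond_t by (simp add: mult.commute)

lemma m_sq: "n = 0 \<Longrightarrow> m^2 = 1/4"
  using cond_s by (simp add: mult.commute)

lemma has_normal_form_cub_cub:
  assumes nu: "\<nu> \<noteq> 0" and nn: "n \<noteq> 0"
  shows "has_normal_form br"
proof -
  have g0: "\<gamma>0 = 0" and g1: "\<gamma>1 = 0"
    using qp_sst_t_s_st qp_sst_s_ss_s nn by simp_all
  have a2: "\<alpha>2 = - \<alpha>1'" and a2': "\<alpha>2' = - \<alpha>3"
    using qp_sst_s_s_st qp_sst_ts_s_s nn by (simp_all add: eq_neg_iff_add_eq_0 add.commute)
  have a3: "\<alpha>3 = \<alpha>1'" using qp_stt_ts_t_t nu a2 by simp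
  have b: "\<beta>1 = 0" "\<beta>1' = 0" "\<beta>2 = 0" "\<beta>2' = 0" using beta_vanish nu nn by simp_all
  have "\<alpha>1' \<noteq> 0" using alpha_squares(1) by auto
  moreover have "(2 * \<alpha>1') * \<gamma> = 0"
    using qp_sst_1_1_s qp_sst_s_1_1 a2 a2' a3 b by algebra
  ultimately have g: "\<gamma> = 0" by simp
  have kill: "shift_kills_linear shift_t shift_s 0"
    unfolding shift_kills_linear_def using g0 g1 a2 a2' a3 b g by simp
  have nf: "normal_form (lc (self_bracket T (-1/(4*\<nu>)) 0 \<nu>)) (lc (self_bracket S (-1/(4*n)) 0 n))
          (lc (ts_reduced 0 0 \<alpha>1' (-\<alpha>1') (-\<alpha>1') \<alpha>1' 0))"
    by (rule normal_form_7I[OF nn nu]) (simp add: pm_half_iff_sq alpha_squares)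
  show ?thesis
    by (rule has_normal_form_reduce[OF kill]) (use nu nn g0 g1 a2 a2' a3 nf in simp)
qed

lemma has_normal_form_quad_cub:
  assumes nu: "\<nu> = 0" and nn: "n \<noteq> 0"
  shows "has_normal_form br"
proof -
  have mu2: "\<mu>^2 = 1/4" using mu_sq nu .
  hence mu0: "\<mu> \<noteq> 0" and pm: "pm_half \<mu>" by (auto simp: pm_half_iff_sq)
  have g0: "\<gamma>0 = 0" and g1: "\<gamma>1 = 0"
    using qp_sst_t_s_st qp_sst_s_ss_s nn by simp_all
  have a2: "\<alpha>2 = - \<alpha>1'" and a2': "\<alpha>2' = - \<alpha>3"
    using qp_sst_s_s_st qp_sst_ts_s_s nn by (simp_all add: eq_neg_iff_add_eq_0 add.commute)
  have b1: "\<beta>1 = 0" "\<beta>1' = 0" using beta_vanish nn by simp_all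
  have pa: "pm_half \<alpha>1'" and "pm_half \<alpha>3" using alpha_squares by (simp_all add: pm_half_iff_sq)
  moreover have "(\<alpha>1' - \<mu>) * (\<alpha>3 + \<mu>) = 0" using qp_stt_t_st_1 a2' mu2 by algebra
  ultimately consider "\<alpha>3 = \<alpha>1'" | "\<alpha>1' = \<mu>" "\<alpha>3 = -\<mu>"
    using pm pm_half_same_or_opp by fastforce
  then show ?thesis
  proof cases
    case 1
    have "(2*\<mu>) * \<beta>2 = 0" using qp_stt_1_st_1 qp_stt_t_s_1 a2' 1 g1 by algebra
    hence b2: "\<beta>2 = 0" using mu0 by simp
    have "(2*\<mu>) * \<beta>2' = 0" using qp_stt_ts_1_1 qp_stt_s_t_1 a2 1 g1 by algebra
    hence b2': "\<beta>2' = 0" using mu0 by simp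
    have "\<gamma> * n = 0" using qp_sst_1_s_s b2 g1 by algebra
    hence g: "\<gamma> = 0" using nn by simp
    have kill: "shift_kills_linear shift_t shift_s 0"
      unfolding shift_kills_linear_def using g0 g1 a2 a2' 1 b1 b2 b2' g by simp
    have nf: "normal_form (lc (self_bracket T 0 \<mu> 0)) (lc (self_bracket S (-1/(4*n)) 0 n))
                (lc (ts_reduced 0 0 \<alpha>1' (-\<alpha>1') (-\<alpha>1') \<alpha>1' 0))"
      by (rule normal_form_5I[OF nn pa pm])
    show ?thesis by (rule has_normal_form_reduce[OF kill]) (use nu nn g0 g1 a2 a2' 1 nf in simp)
  next
    case 2
    have p: "shift_t = 2*\<mu>*lam" unfolding shift_t_def using nu by simp
    have "(2*\<mu>) * (\<beta>2 - lam) = 0" using qp_stt_1_s_t a2' 2 g1 by algebra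
    hence b2: "\<beta>2 = lam" using mu0 by simp
    have "(2*\<mu>) * (\<beta>2' + lam) = 0" using qp_stt_s_1_t a2 2 g1 by algebra
    hence b2': "\<beta>2' = - lam" using mu0 by (simp add: eq_neg_iff_add_eq_0)
    have "\<gamma> * n = 0" using qp_sst_1_s_s a2' 2 g1 by algebra
    hence g: "\<gamma> = 0" using nn by simp
    have kill: "shift_kills_linear shift_t shift_s 0"
      unfolding shift_kills_linear_def p using g0 g1 a2 a2' 2 b1 b2 b2' g mu2 by algebra
    have nf: "normal_form (lc (self_bracket T 0 \<mu> 0)) (lc (self_bracket S (-1/(4*n)) 0 n))
                (lc (ts_reduced 0 0 \<mu> (-\<mu>) \<mu> (-\<mu>) 0))"
      by (rule normal_form_6I[OF nn pm])
    show ?thesis by (rule has_normal_form_reduce[OF kill]) (use nu nn g0 g1 a2 a2' 2 nf in simp)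
  qed
qed

lemma has_normal_form_cub_quad:
  assumes nu: "\<nu> \<noteq> 0" and nn: "n = 0"
  shows "has_normal_form br"
proof -
  have m2: "m^2 = 1/4" using m_sq nn .
  hence m0: "m \<noteq> 0" and pm: "pm_half m" by (auto simp: pm_half_iff_sq)
  have g0: "\<gamma>0 = 0" and g1: "\<gamma>1 = 0"
    using qp_stt_t_t_tt qp_stt_s_s_tt nu by simp_all
  have a2: "\<alpha>2 = - \<alpha>3" and a2': "\<alpha>2' = - \<alpha>1'"
    using qp_stt_ts_t_t qp_stt_t_st_t nu by (simp_all add: eq_neg_iff_add_eq_0 add.commute)
  have b2: "\<beta>2 = 0" "\<beta>2' = 0" using beta_vanish nu by simp_all
  have "pm_half \<alpha>1'" and pd: "pm_half \<alpha>3" using alpha_squares by (simp_all add: pm_half_iff_sq)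
  moreover have "(\<alpha>1' - m) * (\<alpha>3 + m) = 0" using qp_sst_s_1_st a2 m2 by algebra
  ultimately consider "\<alpha>3 = \<alpha>1'" | "\<alpha>1' = m" "\<alpha>3 = -m"
    using pm pm_half_same_or_opp by fastforce
  then show ?thesis
  proof cases
    case 1
    have "(2*m) * \<beta>1 = 0" using qp_sst_s_1_t qp_sst_1_1_st a2 1 b2 by algebra
    hence b1: "\<beta>1 = 0" using m0 by simp
    have "(2*m) * \<beta>1' = 0" using qp_sst_ts_1_1 qp_sst_t_1_s a2' 1 b2 by algebra
    hence b1': "\<beta>1' = 0" using m0 by simp
    have "\<gamma> * \<nu> = 0" using qp_stt_1_t_t b1 b2 g0 by algebra
    hence g: "\<gamma> = 0" using nu by simp
    have kill: "shift_kills_linear shift_t shift_s 0"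
      unfolding shift_kills_linear_def using g0 g1 a2 a2' 1 b1 b1' b2 g by simp
    have "pm_half (-\<alpha>3)" using pd by (auto simp: pm_half_def)
    hence nf: "normal_form (lc (self_bracket T 0 m 0)) (lc (self_bracket S (-1/(4*\<nu>)) 0 \<nu>))
                 (lc (ts_reduced 0 0 (-\<alpha>3) \<alpha>3 \<alpha>3 (-\<alpha>3) 0))"
      using normal_form_5I[OF nu _ pm, of "-\<alpha>3"] by simp
    show ?thesis by (rule has_normal_form_reduce_swap[OF kill]) (use nu nn g0 g1 a2 a2' 1 nf in simp)
  next
    case 2
    have q: "shift_s = 2*m*l" unfolding shift_s_def using nn by simp
    have "(2*m) * (l - \<beta>1) = 0" using qp_sst_1_s_t a2 2 b2 by algebra
    hence b1: "\<beta>1 = l" using m0 by simp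
    have "(2*m) * (l + \<beta>1') = 0" using qp_sst_t_s_1 a2' 2 g0 by algebra
    hence b1': "\<beta>1' = - l" using m0 by (simp add: eq_neg_iff_add_eq_0 add.commute)
    have "\<gamma> * \<nu> = 0" using qp_stt_1_t_t a2 2 b2 g0 by algebra
    hence g: "\<gamma> = 0" using nu by simp
    have kill: "shift_kills_linear shift_t shift_s 0"
      unfolding shift_kills_linear_def q using g0 g1 a2 a2' 2 b1 b1' b2 g m2 by algebra
    have nf: "normal_form (lc (self_bracket T 0 m 0)) (lc (self_bracket S (-1/(4*\<nu>)) 0 \<nu>))
                (lc (ts_reduced 0 0 m (-m) m (-m) 0))"
      by (rule normal_form_6I[OF nu pm])
    show ?thesis by (rule has_normal_form_reduce_swap[OF kill]) (use nu nn g0 g1 a2 a2' 2 nf in simp)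
  qed
qed

lemma has_normal_form_quad_quad_1:
  assumes nu: "\<nu> = 0" and nn: "n = 0" and mm: "m = \<mu>"
    and a1: "\<alpha>1' = \<mu>" and a3: "\<alpha>3 = -\<mu>" and a2': "\<alpha>2' = \<alpha>2"
  shows "has_normal_form br"
proof -
  have mu2: "\<mu>^2 = 1/4" using mu_sq nu .
  hence mu0: "\<mu> \<noteq> 0" and pm: "pm_half \<mu>" by (auto simp: pm_half_iff_sq)
  have p: "shift_t = 2*\<mu>*lam" unfolding shift_t_def using nu by simp
  have q: "shift_s = 2*\<mu>*l" unfolding shift_s_def using nn mm by simp
  have "2*\<mu>*\<beta>1 = \<gamma>0*lam + (\<mu> + \<alpha>2)*l" using qp_stt_1_t_t qp_sst_1_s_t unfolding a1 nu by algebra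
  hence b1: "\<beta>1 = \<gamma>0 * shift_t + (\<alpha>1' + \<alpha>2) * shift_s" unfolding p q a1 using mu2 by algebra
  have "2*\<mu>*\<beta>1' = \<gamma>0*lam + (\<alpha>2 - \<mu>)*l" using qp_stt_t_1_t qp_sst_t_s_1 unfolding a2' a3 nu by algebra
  hence b1': "\<beta>1' = \<gamma>0 * shift_t + (\<alpha>2' + \<alpha>3) * shift_s" unfolding p q a2' a3 using mu2 by algebra
  have "2*\<mu>*\<beta>2 = (\<mu> + \<alpha>2)*lam + \<gamma>1*l" using qp_stt_1_s_t qp_sst_1_s_s unfolding a1 a2' nn by algebra
  hence b2: "\<beta>2 = \<gamma>1 * shift_s + (\<alpha>1' + \<alpha>2') * shift_t" unfolding p q a1 a2' using mu2 by algebra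
  have "2*\<mu>*\<beta>2' = (\<alpha>2 - \<mu>)*lam + \<gamma>1*l" using qp_stt_s_1_t qp_sst_s_s_1 unfolding a3 nn by algebra
  hence b2': "\<beta>2' = \<gamma>1 * shift_s + (\<alpha>2 + \<alpha>3) * shift_t" unfolding p q a3 using mu2 by algebra
  define E where "E = \<gamma>0 * shift_t^2 + \<gamma>1 * shift_s^2 + 2*\<alpha>2 * shift_t * shift_s"
  have "4*(\<alpha>2 + \<mu>)*(\<gamma> - E) = 0"
    using qp_sst_1_1_s alpha_squares(3) mu2 unfolding b1 b2 E_def p q a1 a2' mm by algebra
  moreover have "4*(\<alpha>2 - \<mu>)*(\<gamma> - E) = 0"
    using qp_stt_t_1_1 alpha_squares(3) mu2 unfolding b1' b2' E_def p q a3 a2' mm by algebra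
  ultimately have "8*\<mu>*(\<gamma> - E) = 0" by algebra
  hence "\<gamma> = E" using mu0 by simp
  hence kill: "shift_kills_linear shift_t shift_s 0"
    unfolding shift_kills_linear_def E_def using b1 b1' b2 b2' a1 a2' a3 by (simp add: algebra_simps)
  have nf: "normal_form (lc (self_bracket T 0 \<mu> 0)) (lc (self_bracket S 0 \<mu> 0))
              (lc (ts_reduced \<gamma>0 \<gamma>1 \<mu> \<alpha>2 \<alpha>2 (-\<mu>) 0))"
    by (rule normal_form_1I[OF pm alpha_squares(3)])
  show ?thesis by (rule has_normal_form_reduce[OF kill]) (use nu nn mm a1 a2' a3 nf in simp)
qed

lemma has_normal_form_quad_quad_2:
  assumes nu: "\<nu> = 0" and nn: "n = 0" and g0: "\<gamma>0 = 0" and g1: "\<gamma>1 = 0" and mm: "m = -\<mu>"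
    and pa: "pm_half \<alpha>1'" and a3: "\<alpha>3 = \<alpha>1'" and a2: "\<alpha>2 = -\<mu>" and a2': "\<alpha>2' = \<mu>"
  shows "has_normal_form br"
proof -
  have mu2: "\<mu>^2 = 1/4" using mu_sq nu .
  hence pm: "pm_half \<mu>" by (auto simp: pm_half_iff_sq)
  have p: "shift_t = 2*\<mu>*lam" unfolding shift_t_def using nu by simp
  have q: "shift_s = -2*\<mu>*l" unfolding shift_s_def using nn mm by simp
  have "2*\<mu>*\<beta>1 + (\<alpha>1' - \<mu>) * l = 0" using qp_stt_1_t_t qp_sst_1_s_t unfolding a2 g0 nu by algebra
  hence b1: "\<beta>1 = \<gamma>0 * shift_t + (\<alpha>1' + \<alpha>2) * shift_s" unfolding g0 a2 p q using mu2 by algebra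
  have "2*\<mu>*\<beta>1' + (\<mu> + \<alpha>1') * l = 0" using qp_stt_t_1_t qp_sst_t_s_1 unfolding a2' a3 g0 nu by algebra
  hence b1': "\<beta>1' = \<gamma>0 * shift_t + (\<alpha>2' + \<alpha>3) * shift_s" unfolding g0 a2' a3 p q using mu2 by algebra
  have "2*\<mu>*\<beta>2 = (\<alpha>1' + \<mu>) * lam" using qp_stt_1_s_t qp_stt_1_st_1 unfolding a2' g1 by algebra
  hence b2: "\<beta>2 = \<gamma>1 * shift_s + (\<alpha>1' + \<alpha>2') * shift_t" unfolding g1 a2' p using mu2 by algebra
  have "2*\<mu>*\<beta>2' = (\<alpha>1' - \<mu>) * lam" using qp_stt_s_1_t qp_stt_ts_1_1 unfolding a2 a3 g1 by algebra
  hence b2': "\<beta>2' = \<gamma>1 * shift_s + (\<alpha>2 + \<alpha>3) * shift_t" unfolding g1 a2 a3 p using mu2 by algebra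
  define c where "c = \<gamma> - 2*\<alpha>1' * shift_t * shift_s"
  have kill: "shift_kills_linear shift_t shift_s c"
    unfolding shift_kills_linear_def c_def using b1 b1' b2 b2' g0 g1 a2 a2' a3 by (simp add: algebra_simps)
  have nf: "normal_form (lc (self_bracket T 0 \<mu> 0)) (lc (self_bracket S 0 (-\<mu>) 0))
              (lc (ts_reduced 0 0 \<alpha>1' (-\<mu>) \<mu> \<alpha>1' c))"
    by (rule normal_form_2I[OF pa pm])
  show ?thesis by (rule has_normal_form_reduce[OF kill]) (use nu nn mm g0 g1 a2 a2' a3 nf in simp)
qed

lemma has_normal_form_quad_quad_3:
  assumes nu: "\<nu> = 0" and nn: "n = 0" and g0: "\<gamma>0 = 0" and g1: "\<gamma>1 = 0"
    and a1: "\<alpha>1' = \<mu>" and a2: "\<alpha>2 = -\<mu>" and a2': "\<alpha>2' = \<mu>" and a3: "\<alpha>3 = -\<mu>"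
  shows "has_normal_form br"
proof -
  have mu2: "\<mu>^2 = 1/4" using mu_sq nu .
  hence mu0: "\<mu> \<noteq> 0" and pm: "pm_half \<mu>" by (auto simp: pm_half_iff_sq)
  have pm_m: "pm_half m" using m_sq nn by (simp add: pm_half_iff_sq)
  have p: "shift_t = 2*\<mu>*lam" unfolding shift_t_def using nu by simp
  have "(2*\<mu>) * \<beta>1 = 0" using qp_stt_1_t_t unfolding a1 a2 g0 nu by algebra
  hence b1: "\<beta>1 = 0" using mu0 by simp
  have "(2*\<mu>) * \<beta>1' = 0" using qp_stt_t_1_t unfolding a2' a3 g0 nu by algebra
  hence b1': "\<beta>1' = 0" using mu0 by simp
  have "(2*\<mu>) * (\<beta>2 - lam) = 0" using qp_stt_1_s_t unfolding a1 a2' g1 by algebra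
  hence b2: "\<beta>2 = lam" using mu0 by simp
  have "(2*\<mu>) * (\<beta>2' + lam) = 0" using qp_stt_s_1_t unfolding a2 a3 g1 by algebra
  hence b2': "\<beta>2' = - lam" using mu0 by (simp add: eq_neg_iff_add_eq_0)
  have "(2*\<mu>) * \<gamma> = 0" using qp_stt_1_1_t unfolding a1 a3 b1 b1' by algebra
  hence g: "\<gamma> = 0" using mu0 by simp
  have kill: "shift_kills_linear shift_t shift_s 0"
    unfolding shift_kills_linear_def unfolding p b1 b1' b2 b2' g g0 g1 a1 a2 a2' a3 using mu2 by algebra
  have nf: "normal_form (lc (self_bracket T 0 \<mu> 0)) (lc (self_bracket S 0 m 0))
              (lc (ts_reduced 0 0 \<mu> (-\<mu>) \<mu> (-\<mu>) 0))"
    by (rule normal_form_3I[OF pm_m pm])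
  show ?thesis by (rule has_normal_form_reduce[OF kill]) (use nu nn g0 g1 a1 a2 a2' a3 nf in simp)
qed

lemma has_normal_form_quad_quad_3_swap:
  assumes nu: "\<nu> = 0" and nn: "n = 0" and g0: "\<gamma>0 = 0" and g1: "\<gamma>1 = 0"
    and a1: "\<alpha>1' = m" and a2: "\<alpha>2 = m" and a2': "\<alpha>2' = -m" and a3: "\<alpha>3 = -m"
  shows "has_normal_form br"
proof -
  have m2: "m^2 = 1/4" using m_sq nn .
  hence m0: "m \<noteq> 0" and pm_m: "pm_half m" by (auto simp: pm_half_iff_sq)
  have pm: "pm_half \<mu>" using mu_sq nu by (simp add: pm_half_iff_sq)
  have q: "shift_s = 2*m*l" unfolding shift_s_def using nn by simp
  have "(2*m) * (\<beta>1 - l) = 0" using qp_sst_1_s_t unfolding a1 a2 g0 by algebra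
  hence b1: "\<beta>1 = l" using m0 by simp
  have "(2*m) * (\<beta>1' + l) = 0" using qp_sst_t_s_1 unfolding a2' a3 g0 by algebra
  hence b1': "\<beta>1' = - l" using m0 by (simp add: eq_neg_iff_add_eq_0)
  have "(2*m) * \<beta>2 = 0" using qp_stt_1_st_1 qp_stt_t_s_1 unfolding a1 a2' g1 by algebra
  hence b2: "\<beta>2 = 0" using m0 by simp
  have "(2*m) * \<beta>2' = 0" using qp_stt_ts_1_1 qp_stt_s_t_1 unfolding a2 a3 g1 by algebra
  hence b2': "\<beta>2' = 0" using m0 by simp
  have "(2*m) * \<gamma> = 0" using qp_sst_1_s_1 unfolding a1 a3 b2 b2' by algebra
  hence g: "\<gamma> = 0" using m0 by simp
  have kill: "shift_kills_linear shift_t shift_s 0"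
    unfolding shift_kills_linear_def unfolding q b1 b1' b2 b2' g g0 g1 a1 a2 a2' a3 using m2 by algebra
  have nf: "normal_form (lc (self_bracket T 0 m 0)) (lc (self_bracket S 0 \<mu> 0))
              (lc (ts_reduced 0 0 m (-m) m (-m) 0))"
    by (rule normal_form_3I[OF pm pm_m])
  show ?thesis by (rule has_normal_form_reduce_swap[OF kill]) (use nu nn g0 g1 a1 a2 a2' a3 nf in simp)
qed

lemma has_normal_form_quad_quad_4:
  assumes nu: "\<nu> = 0" and nn: "n = 0" and g0: "\<gamma>0 = 0" and g1: "\<gamma>1 = 0"
    and pa: "pm_half \<alpha>1'" and a3: "\<alpha>3 = \<alpha>1'" and a2: "\<alpha>2 = -\<alpha>1'" and a2': "\<alpha>2' = -\<alpha>1'"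
  shows "has_normal_form br"
proof -
  have pm: "pm_half \<mu>" using mu_sq nu by (simp add: pm_half_iff_sq)
  have pm_m: "pm_half m" using m_sq nn by (simp add: pm_half_iff_sq)
  have a0: "\<alpha>1' \<noteq> 0" using pa by (auto simp: pm_half_def)
  have "(2*\<alpha>1') * \<beta>1 = 0" using qp_stt_1_t_t unfolding a2 g0 nu by algebra
  hence b1: "\<beta>1 = 0" using a0 by simp
  have "(2*\<alpha>1') * \<beta>1' = 0" using qp_stt_t_1_t unfolding a2' a3 g0 nu by algebra
  hence b1': "\<beta>1' = 0" using a0 by simp
  have "(2*\<alpha>1') * \<beta>2 = 0" using qp_stt_1_st_1 qp_stt_t_s_1 unfolding a2' g1 by algebra
  hence b2: "\<beta>2 = 0" using a0 by simp
  have "(2*\<alpha>1') * \<beta>2' = 0" using qp_stt_ts_1_1 qp_stt_s_t_1 unfolding a2 a3 g1 by algebra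
  hence b2': "\<beta>2' = 0" using a0 by simp
  have "(2*\<alpha>1') * \<gamma> = 0" using qp_sst_1_1_s qp_sst_s_1_1 unfolding a2 a2' b1 b1' b2 b2' by algebra
  hence g: "\<gamma> = 0" using a0 by simp
  have kill: "shift_kills_linear shift_t shift_s 0"
    unfolding shift_kills_linear_def using b1 b1' b2 b2' g g0 g1 a2 a2' a3 by simp
  have nf: "normal_form (lc (self_bracket T 0 \<mu> 0)) (lc (self_bracket S 0 m 0))
              (lc (ts_reduced 0 0 \<alpha>1' (-\<alpha>1') (-\<alpha>1') \<alpha>1' 0))"
    by (rule normal_form_4I[OF pa pm_m pm])
  show ?thesis by (rule has_normal_form_reduce[OF kill]) (use nu nn g0 g1 a2 a2' a3 nf in simp)
qed

lemma has_normal_form_quad_quad: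
  assumes nu: "\<nu> = 0" and nn: "n = 0"
  shows "has_normal_form br"
proof (cases "\<gamma>0 = 0 \<and> \<gamma>1 = 0")
  case False
  hence "\<gamma>0 \<noteq> 0 \<or> \<gamma>1 \<noteq> 0" by simp
  hence "\<alpha>1' = \<mu>" and "m = \<alpha>1'" and "\<alpha>3 = -\<mu>" and "\<alpha>2' = \<alpha>2"
    using qp_stt_1_t_tt qp_stt_s_st_1 qp_sst_t_1_st qp_sst_1_ss_s qp_stt_t_1_tt qp_stt_ts_s_1
      qp_sst_t_s_t qp_stt_s_s_t by (auto simp: eq_neg_iff_add_eq_0)
  thus ?thesis using has_normal_form_quad_quad_1[OF nu nn] by simp
next
  case True
  hence g0: "\<gamma>0 = 0" and g1: "\<gamma>1 = 0" by auto
  have mu2: "\<mu>^2 = 1/4" and m2: "m^2 = 1/4" using mu_sq[OF nu] m_sq[OF nn] .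
  have "(\<alpha>2' + m) * (\<alpha>3 + m) = 0" "(\<alpha>1' - m) * (\<alpha>2 - m) = 0"
    "(\<alpha>2 + \<mu>) * (\<alpha>3 + \<mu>) = 0" "(\<alpha>1' - \<mu>) * (\<alpha>2' - \<mu>) = 0"
    using qp_sst_ts_1_s qp_sst_s_1_st qp_stt_ts_t_1 qp_stt_t_st_1 mu2 m2 by simp_all
  moreover have "pm_half \<mu>" "pm_half m" "pm_half \<alpha>1'" "pm_half \<alpha>2" "pm_half \<alpha>2'" "pm_half \<alpha>3"
    using mu2 m2 alpha_squares g0 by (simp_all add: pm_half_iff_sq)
  ultimately show ?thesis
    using pm_half_sign_patterns[of \<mu> m \<alpha>1' \<alpha>2 \<alpha>2' \<alpha>3]
      has_normal_form_quad_quad_1[OF nu nn] has_normal_form_quad_quad_2[OF nu nn g0 g1]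
      has_normal_form_quad_quad_3[OF nu nn g0 g1] has_normal_form_quad_quad_3_swap[OF nu nn g0 g1]
      has_normal_form_quad_quad_4[OF nu nn g0 g1]
    by metis
qed

end

theorem proposition4p8:
  fixes br :: "'k::field_char_0 nc \<Rightarrow> 'k nc \<Rightarrow> 'k nc2"
    and lam \<mu> \<nu> l m n :: 'k
    and \<alpha>0 \<alpha>0' \<beta>0 \<beta>0' \<gamma>0 \<gamma>1 \<alpha>1 \<alpha>1' \<alpha>2 \<alpha>2' \<alpha>3 \<alpha>3' \<beta>1 \<beta>1' \<beta>2 \<beta>2' \<gamma> :: 'k
  assumes db: "is_double_bracket br"
    and tt: "br tgen tgen = lc [(lam, [T], []), (-lam, [], [T]),
                                (\<mu>, [T,T], []), (-\<mu>, [], [T,T]),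
                                (\<nu>, [T,T], [T]), (-\<nu>, [T], [T,T])]"
    and ss: "br sgen sgen = lc [(l, [S], []), (-l, [], [S]),
                                (m, [S,S], []), (-m, [], [S,S]),
                                (n, [S,S], [S]), (-n, [S], [S,S])]"
    and cond_t: "4 * (\<mu>^2 - lam * \<nu>) = 1"
    and cond_s: "4 * (m^2 - l * n) = 1"
    and ts: "br tgen sgen = lc [(\<alpha>0, [T,T], []), (\<alpha>0', [], [T,T]),
                                (\<beta>0, [S,S], []), (\<beta>0', [], [S,S]),
                                (\<gamma>0, [T], [T]), (\<gamma>1, [S], [S]),
                                (\<alpha>1, [T,S], []), (\<alpha>1', [S,T], []),
                                (\<alpha>2, [T], [S]), (\<alpha>2', [S], [T]),
                                (\<alpha>3, [], [T,S]), (\<alpha>3', [], [S,T]),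
                                (\<beta>1, [T], []), (\<beta>1', [], [T]),
                                (\<beta>2, [S], []), (\<beta>2', [], [S]),
                                (\<gamma>, [], [])]"
    and qp: "quasi_poisson br"
  shows "\<exists>br'. is_double_bracket br' \<and> isomorphic_dqp br br' \<and>
           normal_form (br' tgen tgen) (br' sgen sgen) (br' tgen sgen)"
proof -
  interpret qp_bracket br lam \<mu> \<nu> l m n
      \<alpha>0 \<alpha>0' \<beta>0 \<beta>0' \<gamma>0 \<gamma>1 \<alpha>1 \<alpha>1' \<alpha>2 \<alpha>2' \<alpha>3 \<alpha>3' \<beta>1 \<beta>1' \<beta>2 \<beta>2' \<gamma>
    using assms by unfold_locales
  have "has_normal_form br"
    by (cases "\<nu> = 0"; cases "n = 0")
       (simp_all add: has_normal_form_quad_quad has_normal_form_quad_cub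
          has_normal_form_cub_quad has_normal_form_cub_cub)
  thus ?thesis unfolding has_normal_form_def .
qed

end
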